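(* Let $M$ be a highest weight $\mathfrak{gl}_N$-module and let $\boldsymbol\omega=(\omega_k(M))_{k\in\mathbb N}$. Then the assignment $A\mapsto M\otimes V^{\otimes A}$ on objects, together with $s_i,e_i,\hat s_i,\hat e_i,y_i\mapsto$ the operators defined below, defines a functor from $\underline{\mathrm{VB}}_{r,t}(\boldsymbol\omega)$ to the category of $\mathfrak{gl}_N$-modules (all operators are $\mathfrak{gl}_N$-homomorphisms). In particular, for every $A\in\mathrm{Seq}_{r,t}$ the algebra $\mathrm{VB}_A(\boldsymbol\omega)$ acts on $M\otimes V^{\otimes A}$ by $\mathfrak{gl}_N$-module endomorphisms.
   Context: Let $r,t\in\mathbb N$. An $(r,t)$-sequence is a sequence $A=(a_1,\dots,a_{r+t})$ that is a permutation of $(1,\dots,1,-1,\dots,-1)$ ($r$ entries $1$, $t$ entries $-1$); $\mathrm{Seq}_{r,t}$ is the set of these, and the simple transpositions $\mathsf s_j=(j,j+1)$ of $S_{r+t}$ act on it by permuting entries. Fix complex numbers $\boldsymbol\omega=(\omega_k)_{k\in\mathbb N}$. The degenerate affine walled Brauer category $\underline{\mathrm{VB}}_{r,t}(\boldsymbol\omega)$ is the $\mathbb C$-linear category with object set $\mathrm{Seq}_{r,t}$ whose morphisms are generated by: endomorphisms $s_i^{(A)}$ of $A$ for $1\le i\le r+t-1$ with $a_i=a_{i+1}$; endomorphisms $e_i^{(A)}$ of $A$ for $1\le i\le r+t-1$ with $a_i\neq a_{i+1}$; endomorphisms $y_i^{(A)}$ of $A$ for $1\le i\le r+t$; and morphisms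 $\hat s_j^{(A)},\hat e_j^{(A)}:A\to\mathsf s_jA$ whenever $\mathsf s_jA\ne A$. Superscripts are usually omitted; composition $fg$ means $g$ first. A symbol $\dot s_i$ stands for $s_i$ or $\hat s_i$ and $\dot e_i$ for $e_i$ or $\hat e_i$; each relation is imposed for all objects and all choices of dotted symbols (possibly different on the two sides) for which both sides are defined morphisms with the same source and target. Relations: (1) $\dot s_i\dot s_i=1$; (2) $\dot s_i\dot s_j=\dot s_j\dot s_i$ for $|i-j|>1$, $\dot s_i\dot s_{i+1}\dot s_i=\dot s_{i+1}\dot s_i\dot s_{i+1}$, $\dot s_iy_j=y_j\dot s_i$ for $j\ne i,i+1$; (3) $(e_i^{(A)})^2=\omega_0e_i^{(A)}$; (4) $e_1^{(A)}y_1^ke_1^{(A)}=\omega_ke_1^{(A)}$ for all $k\in\mathbb N$ when $a_1=1,a_2=-1$; (5) $\dot s_i\dot e_j=\dot e_j\dot s_i$ and $\dot e_i\dot e_j=\dot e_j\dot e_i$ for $|i-j|>1$, $\dot e_iy_j=y_j\dot e_i$ for $j\neq i,i+1$, $y_iy_j=y_jy_i$; (6) $\hat s_i\dot e_i=\dot e_i=\dot e_i\hat s_i$, $\dot s_i\dot e_{i+1}\dot e_i=\dot s_{i+1}\dot e_i$, $\dot e_i\dot e_{i+1}\dot s_i=\dot e_i\dot s_{i+1}$, $\dot e_{i+1}\dot e_i\dot s_{i+1}=\dot e_{i+1}\dot s_i$, $\dot s_{i+1}\dot e_i\dot e_{i+1}=\dot s_i\dot e_{i+1}$, $\dot e_{i+1}\dot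 e_i\dot e_{i+1}=\dot e_{i+1}$, $\dot e_i\dot e_{i+1}\dot e_i=\dot e_i$; (7) $s_iy_i-y_{i+1}s_i=-1$, $s_iy_{i+1}-y_is_i=1$, $\hat s_iy_i-y_{i+1}\hat s_i=\hat e_i$, $\hat s_iy_{i+1}-y_i\hat s_i=-\hat e_i$; (8) $\dot e_i(y_i+y_{i+1})=0=(y_i+y_{i+1})\dot e_i$. $\mathrm{VB}_A(\boldsymbol\omega):=\operatorname{End}(A)$. $\mathfrak{gl}_N$ data: $I=\{1,\dots,N\}$, $E_{ij}$ matrix units, $\mathfrak n^+$ strictly upper triangular matrices; a highest weight module is one generated by an $\mathfrak h$-weight vector (for the diagonal Cartan $\mathfrak h$) annihilated by $\mathfrak n^+$. $V=\mathbb C^N$ with basis $v_i$, $E_{ij}v_k=\delta_{jk}v_i$; $V^*$ with dual basis $v_i^*$, $E_{ij}v_k^*=-\delta_{ik}v_j^*$. $V^{\otimes A}=V^{a_1}\otimes\cdots\otimes V^{a_{r+t}}$, $V^1=V$, $V^{-1}=V^*$; factors of $M\otimes V^{\otimes A}$ numbered $0,\dots,r+t$ with $M$ at $0$. For $W\in\{V,V^*\}$ write $(w_p,w_p^* )=(v_p,v_p^* )$ if $W=V$ and $(v_p^*,v_p)$ if $W=V^*$. Operators: $s_i$ (if $a_i=a_{i+1}$) and $\hat s_i:M\otimes V^{\otimes A}\to M\otimes V^{\otimes\mathsf s_iA}$ (if $a_i\ne a_{i+1}$) act by the flip $x\otimes y\mapsto y\otimes x$ on factors $i,i+1$; for $a_i\ne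 a_{i+1}$ and $W=V^{a_i}$, $e_i$ acts on factors $i,i+1$ by $w_p\otimes w_q^*\mapsto\delta_{pq}\sum_{k\in I}w_k\otimes w_k^*$ and $\hat e_i:M\otimes V^{\otimes A}\to M\otimes V^{\otimes\mathsf s_iA}$ by $w_p\otimes w_q^*\mapsto\delta_{pq}\sum_{k\in I}w_k^*\otimes w_k$; all other factors are fixed. With $\Omega=\sum_{i,j}E_{ij}\otimes E_{ji}$ and $\Omega_{kl}$ its action on factors $k<l$, $y_i=\sum_{0\le k<i}\Omega_{ki}+\frac N2$. For a highest weight module $M$, $\omega_k(M)$ is the scalar by which the composite $M\to M\otimes V\otimes V^*\xrightarrow{y_1^k}M\otimes V\otimes V^*\to M$ acts, the first map being $m\mapsto\sum_jm\otimes v_j\otimes v_j^*$ and the last $m\otimes v_i\otimes v_j^*\mapsto\delta_{ij}m$ (this composite is a scalar multiple of the identity). *)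

theory Defs
  imports Complex_Main
begin

(* Conventions.
   * Basis indices of V = C^N are 0..N-1 (the paper uses 1..N); E_ij for i,j<N.
   * Positions (factor numbers) in sequences and tensor factors are 1-based as
     in the paper: position k of A :: int list is A!(k-1).
   * A gl_N-module M is the type 'm with complex scalar multiplication smul and
     action act i j = action of the matrix unit E_ij.
   * M (x) V^{(x)A} (n = length A factors) is modelled by coordinates: a function
     x :: nat list => 'm vanishing outside the index lists ps of length n with
     entries < N; x stands for  sum_ps  x(ps) (x) w_{ps!0} (x) ... (x) w_{ps!(n-1)}
     where w_p = v_p at a position with a_k = 1 and w_p = v_p^* where a_k = -1.   *)

definition gl_module :: "nat \<Rightarrow> (complex \<Rightarrow> 'm::ab_group_add \<Rightarrow> 'm) \<Rightarrow> (nat \<Rightarrow> nat \<Rightarrow> 'm \<Rightarrow> 'm) \<Rightarrow> bool" where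
  "gl_module N smul act \<longleftrightarrow> module smul \<and>
     (\<forall>i<N. \<forall>j<N. (\<forall>x y. act i j (x + y) = act i j x + act i j y) \<and>
                    (\<forall>c x. act i j (smul c x) = smul c (act i j x))) \<and>
     (\<forall>i<N. \<forall>j<N. \<forall>k<N. \<forall>l<N. \<forall>x.
        act i j (act k l x) - act k l (act i j x)
          = (if j = k then act i l x else 0) - (if l = i then act k j x else 0))"

definition highest_weight :: "nat \<Rightarrow> (complex \<Rightarrow> 'm::ab_group_add \<Rightarrow> 'm) \<Rightarrow> (nat \<Rightarrow> nat \<Rightarrow> 'm \<Rightarrow> 'm) \<Rightarrow> bool" where
  "highest_weight N smul act \<longleftrightarrow>
     (\<exists>v0 (lam :: nat \<Rightarrow> complex). v0 \<noteq> 0 \<and>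
        (\<forall>i<N. act i i v0 = smul (lam i) v0) \<and>
        (\<forall>i<N. \<forall>j<N. i < j \<longrightarrow> act i j v0 = 0) \<and>
        (\<forall>S. module.subspace smul S \<and> v0 \<in> S \<and>
              (\<forall>i<N. \<forall>j<N. \<forall>x\<in>S. act i j x \<in> S) \<longrightarrow> S = UNIV))"

definition Seq :: "nat \<Rightarrow> nat \<Rightarrow> int list set" where
  "Seq r t = {A. set A \<subseteq> {1, -1} \<and> length (filter (\<lambda>a. a = 1) A) = r
                  \<and> length (filter (\<lambda>a. a = -1) A) = t}"

definition seq_swap :: "int list \<Rightarrow> nat \<Rightarrow> int list" where
  "seq_swap A i = A[i - 1 := A ! i, i := A ! (i - 1)]"

definition valid :: "nat \<Rightarrow> nat \<Rightarrow> nat list \<Rightarrow> bool" where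
  "valid N n ps \<longleftrightarrow> length ps = n \<and> (\<forall>p\<in>set ps. p < N)"

(* coordinate model of M (x) V^{(x)A}, n = length A *)
definition Tens :: "nat \<Rightarrow> nat \<Rightarrow> (nat list \<Rightarrow> 'm::zero) set" where
  "Tens N n = {x. \<forall>ps. \<not> valid N n ps \<longrightarrow> x ps = 0}"

(* E_ab acting on factor k only (k = 0: the factor M; k >= 1: position k of A) *)
definition facact :: "nat \<Rightarrow> (nat \<Rightarrow> nat \<Rightarrow> 'm \<Rightarrow> 'm) \<Rightarrow> int list \<Rightarrow> nat \<Rightarrow> nat \<Rightarrow> nat
                        \<Rightarrow> (nat list \<Rightarrow> 'm::ab_group_add) \<Rightarrow> nat list \<Rightarrow> 'm" where
  "facact N act A k a b x = (\<lambda>ps. if valid N (length A) ps then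
      (if k = 0 then act a b (x ps)
       else if A ! (k - 1) = 1 then (if ps ! (k - 1) = a then x (ps[k - 1 := b]) else 0)
       else (if ps ! (k - 1) = b then - x (ps[k - 1 := a]) else 0))
    else 0)"

definition glact :: "nat \<Rightarrow> (nat \<Rightarrow> nat \<Rightarrow> 'm \<Rightarrow> 'm) \<Rightarrow> int list \<Rightarrow> nat \<Rightarrow> nat
                        \<Rightarrow> (nat list \<Rightarrow> 'm::ab_group_add) \<Rightarrow> nat list \<Rightarrow> 'm" where
  "glact N act A a b x = (\<lambda>ps. \<Sum>k\<in>{0..length A}. facact N act A k a b x ps)"

definition Omega :: "nat \<Rightarrow> (nat \<Rightarrow> nat \<Rightarrow> 'm \<Rightarrow> 'm) \<Rightarrow> int list \<Rightarrow> nat \<Rightarrow> nat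
                        \<Rightarrow> (nat list \<Rightarrow> 'm::ab_group_add) \<Rightarrow> nat list \<Rightarrow> 'm" where
  "Omega N act A k l x = (\<lambda>ps. \<Sum>a<N. \<Sum>b<N. facact N act A k a b (facact N act A l b a x) ps)"

definition yop :: "nat \<Rightarrow> (complex \<Rightarrow> 'm \<Rightarrow> 'm) \<Rightarrow> (nat \<Rightarrow> nat \<Rightarrow> 'm \<Rightarrow> 'm) \<Rightarrow> int list \<Rightarrow> nat
                        \<Rightarrow> (nat list \<Rightarrow> 'm::ab_group_add) \<Rightarrow> nat list \<Rightarrow> 'm" where
  "yop N smul act A i x = (\<lambda>ps. if valid N (length A) ps then
      (\<Sum>k<i. Omega N act A k i x ps) + smul (of_nat N / 2) (x ps) else 0)"

definition sop :: "nat \<Rightarrow> nat \<Rightarrow> nat \<Rightarrow> (nat list \<Rightarrow> 'm::zero) \<Rightarrow> nat list \<Rightarrow> 'm" where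
  "sop N n i x = (\<lambda>ps. if valid N n ps then x (ps[i - 1 := ps ! i, i := ps ! (i - 1)]) else 0)"

(* w_p (x) w_q^* |-> delta_pq sum_k w_k (x) w_k^*  (operator e_i), resp.
   |-> delta_pq sum_k w_k^* (x) w_k (operator hat e_i): same coordinates *)
definition eop :: "nat \<Rightarrow> nat \<Rightarrow> nat \<Rightarrow> (nat list \<Rightarrow> 'm::comm_monoid_add) \<Rightarrow> nat list \<Rightarrow> 'm" where
  "eop N n i x = (\<lambda>ps. if valid N n ps \<and> ps ! (i - 1) = ps ! i
                        then (\<Sum>p<N. x (ps[i - 1 := p, i := p])) else 0)"

(* generators of the degenerate affine walled Brauer category:
   Sp i = s_i, Sh i = hat s_i, Ep i = e_i, Eh i = hat e_i, Yg i = y_i *)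
datatype gen = Sp nat | Sh nat | Ep nat | Eh nat | Yg nat

fun gen_defined :: "int list \<Rightarrow> gen \<Rightarrow> bool" where
  "gen_defined A (Sp i) = (1 \<le> i \<and> i < length A \<and> A ! (i - 1) = A ! i)"
| "gen_defined A (Sh i) = (1 \<le> i \<and> i < length A \<and> A ! (i - 1) \<noteq> A ! i)"
| "gen_defined A (Ep i) = (1 \<le> i \<and> i < length A \<and> A ! (i - 1) \<noteq> A ! i)"
| "gen_defined A (Eh i) = (1 \<le> i \<and> i < length A \<and> A ! (i - 1) \<noteq> A ! i)"
| "gen_defined A (Yg i) = (1 \<le> i \<and> i \<le> length A)"

fun gen_target :: "int list \<Rightarrow> gen \<Rightarrow> int list" where
  "gen_target A (Sp i) = A"
| "gen_target A (Sh i) = seq_swap A i"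
| "gen_target A (Ep i) = A"
| "gen_target A (Eh i) = seq_swap A i"
| "gen_target A (Yg i) = A"

fun gen_op :: "nat \<Rightarrow> (complex \<Rightarrow> 'm \<Rightarrow> 'm) \<Rightarrow> (nat \<Rightarrow> nat \<Rightarrow> 'm \<Rightarrow> 'm) \<Rightarrow> int list \<Rightarrow> gen
                 \<Rightarrow> (nat list \<Rightarrow> 'm::ab_group_add) \<Rightarrow> nat list \<Rightarrow> 'm" where
  "gen_op N smul act A (Sp i) = sop N (length A) i"
| "gen_op N smul act A (Sh i) = sop N (length A) i"
| "gen_op N smul act A (Ep i) = eop N (length A) i"
| "gen_op N smul act A (Eh i) = eop N (length A) i"
| "gen_op N smul act A (Yg i) = yop N smul act A i"

(* words: [f1, ..., fm] stands for the composite f1 f2 ... fm (fm applied first) *)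
definition word_target :: "int list \<Rightarrow> gen list \<Rightarrow> int list" where
  "word_target A w = foldr (\<lambda>g B. gen_target B g) w A"

fun word_defined :: "int list \<Rightarrow> gen list \<Rightarrow> bool" where
  "word_defined A [] = True"
| "word_defined A (g # w) = (word_defined A w \<and> gen_defined (word_target A w) g)"

fun word_op :: "nat \<Rightarrow> (complex \<Rightarrow> 'm \<Rightarrow> 'm) \<Rightarrow> (nat \<Rightarrow> nat \<Rightarrow> 'm \<Rightarrow> 'm) \<Rightarrow> int list \<Rightarrow> gen list
                 \<Rightarrow> (nat list \<Rightarrow> 'm::ab_group_add) \<Rightarrow> nat list \<Rightarrow> 'm" where
  "word_op N smul act A [] x = x"
| "word_op N smul act A (g # w) x = gen_op N smul act (word_target A w) g (word_op N smul act A w x)"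

type_synonym lcomb = "(complex \<times> gen list) list"

definition lc_ok :: "int list \<Rightarrow> lcomb \<Rightarrow> int list \<Rightarrow> bool" where
  "lc_ok A c T \<longleftrightarrow> (\<forall>(z, w) \<in> set c. word_defined A w \<and> word_target A w = T)"

definition lc_op :: "nat \<Rightarrow> (complex \<Rightarrow> 'm \<Rightarrow> 'm) \<Rightarrow> (nat \<Rightarrow> nat \<Rightarrow> 'm \<Rightarrow> 'm) \<Rightarrow> int list \<Rightarrow> lcomb
                 \<Rightarrow> (nat list \<Rightarrow> 'm::ab_group_add) \<Rightarrow> nat list \<Rightarrow> 'm" where
  "lc_op N smul act A c x = (\<lambda>ps. sum_list (map (\<lambda>(z, w). smul z (word_op N smul act A w x ps)) c))"

abbreviation one :: "gen list \<Rightarrow> lcomb" where "one w \<equiv> [(1, w)]"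

definition dS :: "nat \<Rightarrow> gen set" where "dS i = {Sp i, Sh i}"
definition dE :: "nat \<Rightarrow> gen set" where "dE i = {Ep i, Eh i}"

definition far :: "nat \<Rightarrow> nat \<Rightarrow> bool" where "far i j \<longleftrightarrow> i + 1 < j \<or> j + 1 < i"

(* defining relations (1)-(8) of VB_{r,t}(omega), with source object A; each relation
   is imposed whenever both sides are defined with the same source and target *)
definition VB_rels :: "(nat \<Rightarrow> complex) \<Rightarrow> int list \<Rightarrow> (lcomb \<times> lcomb) set" where
  "VB_rels \<omega> A =
     \<comment> \<open>(1)\<close>
     {(one [a, b], one []) | i a b. a \<in> dS i \<and> b \<in> dS i}
   \<union> \<comment> \<open>(2)\<close>
     {(one [a, b], one [c, d]) | i j a b c d. far i j \<and> a \<in> dS i \<and> b \<in> dS j \<and> c \<in> dS j \<and> d \<in> dS i}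
   \<union> {(one [a, b, c], one [d, e, f]) | i a b c d e f.
        a \<in> dS i \<and> b \<in> dS (i + 1) \<and> c \<in> dS i \<and> d \<in> dS (i + 1) \<and> e \<in> dS i \<and> f \<in> dS (i + 1)}
   \<union> {(one [a, Yg j], one [Yg j, b]) | i j a b. j \<noteq> i \<and> j \<noteq> i + 1 \<and> a \<in> dS i \<and> b \<in> dS i}
   \<union> \<comment> \<open>(3)\<close>
     {(one [Ep i, Ep i], [(\<omega> 0, [Ep i])]) | i. True}
   \<union> \<comment> \<open>(4)\<close>
     {(one ([Ep 1] @ replicate k (Yg 1) @ [Ep 1]), [(\<omega> k, [Ep 1])]) | k.
        length A \<ge> 2 \<and> A ! 0 = 1 \<and> A ! 1 = -1}
   \<union> \<comment> \<open>(5)\<close>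
     {(one [a, b], one [c, d]) | i j a b c d. far i j \<and> a \<in> dS i \<and> b \<in> dE j \<and> c \<in> dE j \<and> d \<in> dS i}
   \<union> {(one [a, b], one [c, d]) | i j a b c d. far i j \<and> a \<in> dE i \<and> b \<in> dE j \<and> c \<in> dE j \<and> d \<in> dE i}
   \<union> {(one [a, Yg j], one [Yg j, b]) | i j a b. j \<noteq> i \<and> j \<noteq> i + 1 \<and> a \<in> dE i \<and> b \<in> dE i}
   \<union> {(one [Yg i, Yg j], one [Yg j, Yg i]) | i j. True}
   \<union> \<comment> \<open>(6)\<close>
     {(one [Sh i, a], one [b]) | i a b. a \<in> dE i \<and> b \<in> dE i}
   \<union> {(one [a, Sh i], one [b]) | i a b. a \<in> dE i \<and> b \<in> dE i}
   \<union> {(one [a, b, c], one [d, e]) | i a b c d e.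
        a \<in> dS i \<and> b \<in> dE (i + 1) \<and> c \<in> dE i \<and> d \<in> dS (i + 1) \<and> e \<in> dE i}
   \<union> {(one [a, b, c], one [d, e]) | i a b c d e.
        a \<in> dE i \<and> b \<in> dE (i + 1) \<and> c \<in> dS i \<and> d \<in> dE i \<and> e \<in> dS (i + 1)}
   \<union> {(one [a, b, c], one [d, e]) | i a b c d e.
        a \<in> dE (i + 1) \<and> b \<in> dE i \<and> c \<in> dS (i + 1) \<and> d \<in> dE (i + 1) \<and> e \<in> dS i}
   \<union> {(one [a, b, c], one [d, e]) | i a b c d e.
        a \<in> dS (i + 1) \<and> b \<in> dE i \<and> c \<in> dE (i + 1) \<and> d \<in> dS i \<and> e \<in> dE (i + 1)}
   \<union> {(one [a, b, c], one [d]) | i a b c d.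
        a \<in> dE (i + 1) \<and> b \<in> dE i \<and> c \<in> dE (i + 1) \<and> d \<in> dE (i + 1)}
   \<union> {(one [a, b, c], one [d]) | i a b c d.
        a \<in> dE i \<and> b \<in> dE (i + 1) \<and> c \<in> dE i \<and> d \<in> dE i}
   \<union> \<comment> \<open>(7)\<close>
     {([(1, [Sp i, Yg i]), (-1, [Yg (i + 1), Sp i])], [(-1, [])]) | i. True}
   \<union> {([(1, [Sp i, Yg (i + 1)]), (-1, [Yg i, Sp i])], [(1, [])]) | i. True}
   \<union> {([(1, [Sh i, Yg i]), (-1, [Yg (i + 1), Sh i])], [(1, [Eh i])]) | i. True}
   \<union> {([(1, [Sh i, Yg (i + 1)]), (-1, [Yg i, Sh i])], [(-1, [Eh i])]) | i. True}
   \<union> \<comment> \<open>(8)\<close>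
     {([(1, [a, Yg i]), (1, [a, Yg (i + 1)])], []) | i a. a \<in> dE i}
   \<union> {([(1, [Yg i, a]), (1, [Yg (i + 1), a])], []) | i a. a \<in> dE i}"

(* omega_k(M): the scalar by which  M -> M (x) V (x) V^* --y_1^k--> M (x) V (x) V^* -> M  acts *)
definition omega_comp :: "nat \<Rightarrow> (complex \<Rightarrow> 'm \<Rightarrow> 'm) \<Rightarrow> (nat \<Rightarrow> nat \<Rightarrow> 'm \<Rightarrow> 'm) \<Rightarrow> nat \<Rightarrow> 'm::ab_group_add \<Rightarrow> 'm" where
  "omega_comp N smul act k m =
     (let x0 = (\<lambda>ps. if valid N 2 ps \<and> ps ! 0 = ps ! 1 then m else 0);
          X = (yop N smul act [1, -1] 1 ^^ k) x0
      in \<Sum>i<N. X [i, i])"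

definition omegaM :: "nat \<Rightarrow> (complex \<Rightarrow> 'm::ab_group_add \<Rightarrow> 'm) \<Rightarrow> (nat \<Rightarrow> nat \<Rightarrow> 'm \<Rightarrow> 'm) \<Rightarrow> nat \<Rightarrow> complex" where
  "omegaM N smul act k = (SOME c. \<forall>m::'m. omega_comp N smul act k m = smul c m)"

end

theory Submission
  imports Defs "HOL-Library.Function_Algebras"
begin

(* All operators are expressed through the actions E^(k)_ab of the matrix units on the single
   factors of M (x) V^(x)A, factor 0 being M.  The flips s_i and the contractions e_i only touch
   the positions i, i+1, so the relations among them are checked on coordinates in which two or
   three positions of the index list are overwritten.  Both commute with the diagonal gl_N-action;
   for e_i this holds because e_i annihilates E^(i) + E^(i+1) from either side when the two
   factors are V and V^*.

   The split Casimir Omega_kl commutes with the diagonal action on the factors k and l, hence with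
   the total action, so each y_i = sum_{k<i} Omega_ki + N/2 is a homomorphism.  For i < j the
   terms of y_j are either Omega_lj with i < l, acting on factors disjoint from those of y_i, or
   built from the diagonal action on the factors 0..i, which commutes with y_i; so the y_i commute.
   Conjugation by s_i permutes the Omega_kl, and Omega_(i,i+1) equals s_i on V (x) V and -e_i on
   a mixed pair; this gives (7), and (8) follows as e_i kills the diagonal action on i, i+1.

   The composite defining omega_k(M) commutes with gl_N, so it sends the highest weight vector v0
   to a vector of the same weight.  All other weights of M are strictly lower, as measured by the
   grading sum_i i E_ii, hence this vector is c v0, and since v0 generates M the composite is
   multiplication by c.  Relation (4) reduces to this composite on the first two factors. *)

definition commuting :: "('a \<Rightarrow> 'a) \<Rightarrow> ('a \<Rightarrow> 'a) \<Rightarrow> bool" where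
  "commuting f g \<longleftrightarrow> (\<forall>x. f (g x) = g (f x))"

lemma commuting_sym: "commuting f g \<Longrightarrow> commuting g f"
  unfolding commuting_def by simp

lemma commuting_sum:
  "additive f \<Longrightarrow> (\<And>i. i \<in> I \<Longrightarrow> commuting f (g i)) \<Longrightarrow> commuting f (\<lambda>x. \<Sum>i\<in>I. g i x)"
  unfolding commuting_def by (simp add: additive.sum)

lemma commuting_comp: "commuting f g \<Longrightarrow> commuting f h \<Longrightarrow> commuting f (\<lambda>x. g (h x))"
  unfolding commuting_def by simp

lemma commuting_add:
  "additive f \<Longrightarrow> commuting f g \<Longrightarrow> commuting f h \<Longrightarrow> commuting f (\<lambda>x. g x + h x)"
  unfolding commuting_def by (simp add: additive.add)

lemma commuting_funpow: "commuting f g \<Longrightarrow> commuting (f ^^ k) g"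
  unfolding commuting_def by (induction k) simp_all

lemma additive_funpow: "additive (f :: 'a::ab_group_add \<Rightarrow> 'a) \<Longrightarrow> additive (f ^^ k)"
  by (induction k) (simp_all add: additive_def)

lemma additive_sum_ops: "(\<And>i. i \<in> I \<Longrightarrow> additive (g i)) \<Longrightarrow> additive (\<lambda>x. \<Sum>i\<in>I. g i x)"
  unfolding additive_def by (simp add: sum.distrib)

lemma additive_comp: "additive f \<Longrightarrow> additive g \<Longrightarrow> additive (\<lambda>x. f (g x))"
  unfolding additive_def by simp

lemma sum_remove2:
  assumes "finite S" "a \<in> S" "b \<in> S" "a \<noteq> b"
  shows "sum F S = (F a + F b) + sum F (S - {a, b})"
proof -
  have "S = {a, b} \<union> (S - {a, b})" using assms by auto
  then have "sum F S = sum F {a, b} + sum F (S - {a, b})"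
    using assms(1) by (metis Diff_disjoint finite_Diff sum.union_disjoint finite.emptyI finite_insert)
  then show ?thesis using assms(4) by simp
qed

section \<open>Split Casimir operators on a tensor product\<close>

text \<open>\<open>E k a b\<close> is the matrix unit \<open>E\<^sub>a\<^sub>b\<close> acting on the tensor factor \<open>k\<close> of a product with
  factors \<open>0, \<dots>, n\<close>.\<close>

locale factor_actions =
  fixes N n :: nat and E :: "nat \<Rightarrow> nat \<Rightarrow> nat \<Rightarrow> 'f::ab_group_add \<Rightarrow> 'f"
  assumes additive_E: "k \<le> n \<Longrightarrow> a < N \<Longrightarrow> b < N \<Longrightarrow> additive (E k a b)"
    and E_commute: "k \<le> n \<Longrightarrow> l \<le> n \<Longrightarrow> k \<noteq> l \<Longrightarrow> a < N \<Longrightarrow> b < N \<Longrightarrow> c < N \<Longrightarrow> d < N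
      \<Longrightarrow> E k a b (E l c d x) = E l c d (E k a b x)"
    and E_bracket: "k \<le> n \<Longrightarrow> a < N \<Longrightarrow> b < N \<Longrightarrow> c < N \<Longrightarrow> d < N \<Longrightarrow>
      E k a b (E k c d x) = E k c d (E k a b x) + (if b = c then E k a d x else 0)
          - (if d = a then E k c b x else 0)"
begin

definition Casimir :: "nat \<Rightarrow> nat \<Rightarrow> 'f \<Rightarrow> 'f" where
  "Casimir k l x = (\<Sum>a<N. \<Sum>b<N. E k a b (E l b a x))"

definition diag_act :: "nat \<Rightarrow> nat \<Rightarrow> nat \<Rightarrow> 'f \<Rightarrow> 'f" where
  "diag_act m a b x = (\<Sum>k\<in>{0..m}. E k a b x)"

definition JM :: "nat \<Rightarrow> 'f \<Rightarrow> 'f" where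
  "JM i x = (\<Sum>k<i. Casimir k i x)"

lemma additive_Casimir: "k \<le> n \<Longrightarrow> l \<le> n \<Longrightarrow> additive (Casimir k l)"
  unfolding Casimir_def[abs_def]
  by (intro additive_sum_ops) (auto intro!: additive_comp[of "E k _ _" "E l _ _"] additive_E)

lemma additive_diag_act: "m \<le> n \<Longrightarrow> a < N \<Longrightarrow> b < N \<Longrightarrow> additive (diag_act m a b)"
  unfolding diag_act_def[abs_def] by (intro additive_sum_ops additive_E) auto

lemma additive_JM: "i \<le> n \<Longrightarrow> additive (JM i)"
  unfolding JM_def[abs_def] by (intro additive_sum_ops additive_Casimir) auto

lemma commuting_E: "k \<le> n \<Longrightarrow> l \<le> n \<Longrightarrow> k \<noteq> l \<Longrightarrow> a < N \<Longrightarrow> b < N \<Longrightarrow> c < N \<Longrightarrow> d < N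
   \<Longrightarrow> commuting (E k a b) (E l c d)"
  unfolding commuting_def using E_commute by blast

lemma commuting_CasimirI: "additive f \<Longrightarrow> (\<And>a b. a < N \<Longrightarrow> b < N \<Longrightarrow> commuting f (E k a b)) \<Longrightarrow>
   (\<And>a b. a < N \<Longrightarrow> b < N \<Longrightarrow> commuting f (E l a b)) \<Longrightarrow> commuting f (Casimir k l)"
  unfolding Casimir_def[abs_def]
  by (intro commuting_sum additive_sum_ops) (auto intro!: commuting_comp[of f "E k _ _" "E l _ _"])

lemma commuting_E_Casimir: "m \<le> n \<Longrightarrow> k \<le> n \<Longrightarrow> l \<le> n \<Longrightarrow> m \<noteq> k \<Longrightarrow> m \<noteq> l \<Longrightarrow> c < N \<Longrightarrow> d < N
   \<Longrightarrow> commuting (E m c d) (Casimir k l)"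
  by (intro commuting_CasimirI additive_E commuting_E) auto

lemma E_E_Casimir_summand:
  assumes "k \<le> n" "l \<le> n" "k \<noteq> l" "c < N" "d < N" "a < N" "b < N"
  shows "E k c d (E k a b (E l b a x)) = E k a b (E l b a (E k c d x))
     + (if d = a then E k c b (E l b a x) else 0) - (if b = c then E k a d (E l b a x) else 0)"
proof -
  have "E k c d (E k a b (E l b a x)) = E k a b (E k c d (E l b a x))
     + (if d = a then E k c b (E l b a x) else 0) - (if b = c then E k a d (E l b a x) else 0)"
    using E_bracket[of k c d a b] assms by simp
  also have "E k c d (E l b a x) = E l b a (E k c d x)" using E_commute assms by metis
  finally show ?thesis .
qed

lemma E_E_Casimir_summand':
  assumes "k \<le> n" "l \<le> n" "k \<noteq> l" "c < N" "d < N" "a < N" "b < N"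
  shows "E l c d (E k a b (E l b a x)) = E k a b (E l b a (E l c d x))
     + (if d = b then E k a b (E l c a x) else 0) - (if a = c then E k a b (E l b d x) else 0)"
proof -
  have "E l c d (E k a b (E l b a x)) = E k a b (E l c d (E l b a x))" using E_commute assms by metis
  also have "E l c d (E l b a x) = E l b a (E l c d x) + (if d = b then E l c a x else 0)
      - (if a = c then E l b d x else 0)"
    using E_bracket[of l c d b a] assms by simp
  also have "E k a b (\<dots>) = E k a b (E l b a (E l c d x))
     + (if d = b then E k a b (E l c a x) else 0) - (if a = c then E k a b (E l b d x) else 0)"
  proof -
    have ad: "additive (E k a b)" using additive_E assms by simp
    show ?thesis by (simp add: if_distrib[of "E k a b"] additive.diff[OF ad] additive.add[OF ad]
        additive.zero[OF ad])
  qed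
  finally show ?thesis .
qed

text \<open>The four bracket terms cancel in pairs after exchanging the summation indices.\<close>

lemma Casimir_commutes_pair_action:
  assumes kl: "k \<le> n" "l \<le> n" "k \<noteq> l" and cd: "c < N" "d < N"
  shows "E k c d (Casimir k l x) + E l c d (Casimir k l x) = Casimir k l (E k c d x + E l c d x)"
proof -
  have "E k c d (Casimir k l x) + E l c d (Casimir k l x) =
     (\<Sum>a<N. \<Sum>b<N. E k c d (E k a b (E l b a x)) + E l c d (E k a b (E l b a x)))"
    unfolding Casimir_def using additive_E kl cd by (simp add: additive.sum sum.distrib)
  also have "\<dots> = (\<Sum>a<N. \<Sum>b<N. E k a b (E l b a (E k c d x)) + E k a b (E l b a (E l c d x)))
     + ((\<Sum>a<N. \<Sum>b<N. (if d = a then E k c b (E l b a x) else 0))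
      - (\<Sum>a<N. \<Sum>b<N. (if b = c then E k a d (E l b a x) else 0))
      + (\<Sum>a<N. \<Sum>b<N. (if d = b then E k a b (E l c a x) else 0))
      - (\<Sum>a<N. \<Sum>b<N. (if a = c then E k a b (E l b d x) else 0)))"
    apply (simp only: sum.distrib[symmetric] sum_subtractf[symmetric])
    apply (intro sum.cong refl)
    apply (simp only: E_E_Casimir_summand[OF kl cd] E_E_Casimir_summand'[OF kl cd] lessThan_iff)
    apply (simp only: diff_conv_add_uminus add.assoc)
    by (simp add: algebra_simps)
  also have "(\<Sum>a<N. \<Sum>b<N. (if d = a then E k c b (E l b a x) else 0)) = (\<Sum>b<N. E k c b (E l b d x))"
    using cd by (subst sum.swap) simp
  also have "(\<Sum>a<N. \<Sum>b<N. (if b = c then E k a d (E l b a x) else 0)) = (\<Sum>a<N. E k a d (E l c a x))"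
    using cd by simp
  also have "(\<Sum>a<N. \<Sum>b<N. (if d = b then E k a b (E l c a x) else 0)) = (\<Sum>a<N. E k a d (E l c a x))"
    using cd by simp
  also have "(\<Sum>a<N. \<Sum>b<N. (if a = c then E k a b (E l b d x) else 0)) = (\<Sum>b<N. E k c b (E l b d x))"
    using cd by (subst sum.swap) simp
  also have "(\<Sum>a<N. \<Sum>b<N. E k a b (E l b a (E k c d x)) + E k a b (E l b a (E l c d x)))
     = Casimir k l (E k c d x + E l c d x)"
    unfolding Casimir_def using additive_E kl by (intro sum.cong refl) (simp add: additive.add)
  finally show ?thesis by simp
qed

lemma Casimir_add_common_right:
    "Casimir k m x + Casimir l m x = (\<Sum>a<N. \<Sum>b<N. E k a b (E m b a x) + E l a b (E m b a x))"
  unfolding Casimir_def by (simp add: sum.distrib)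

lemma Casimir_add_common_right_factor:
  assumes "k \<le> n" "l \<le> n" "m \<le> n" "k \<noteq> m" "l \<noteq> m"
  shows "Casimir k m x + Casimir l m x = (\<Sum>a<N. \<Sum>b<N. E m b a (E k a b x + E l a b x))"
  unfolding Casimir_add_common_right using assms E_commute additive_E
  by (intro sum.cong refl) (simp add: additive_def)

lemma Casimir_add_common_left:
  assumes "k \<le> n" "l \<le> n" "m \<le> n" "k \<noteq> m" "k \<noteq> l"
  shows "Casimir k l x + Casimir k m x = (\<Sum>a<N. \<Sum>b<N. E k a b (E l b a x + E m b a x))"
  unfolding Casimir_def using assms additive_E
  by (simp add: sum.distrib additive_def)

lemma diag_act_split:
  assumes "k \<le> m" "l \<le> m" "k \<noteq> l"
  shows "diag_act m c d x = (E k c d x + E l c d x) + (\<Sum>j\<in>{0..m} - {k, l}. E j c d x)"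
  unfolding diag_act_def using assms by (simp add: sum_remove2[where a = k and b = l])

lemma commuting_diag_act_Casimir:
  assumes "k \<le> m" "l \<le> m" "k \<noteq> l" "m \<le> n" "c < N" "d < N"
  shows "commuting (diag_act m c d) (Casimir k l)"
  unfolding commuting_def
proof
  fix x
  have "diag_act m c d (Casimir k l x)
      = (E k c d (Casimir k l x) + E l c d (Casimir k l x))
          + (\<Sum>j\<in>{0..m} - {k, l}. E j c d (Casimir k l x))"
    by (rule diag_act_split) (use assms in auto)
  also have "\<dots> = Casimir k l (E k c d x + E l c d x) + (\<Sum>j\<in>{0..m} - {k, l}. Casimir k l (E j c d x))"
    using assms Casimir_commutes_pair_action[of k l c d x] commuting_E_Casimir[of _ k l c d]
    unfolding commuting_def by (intro arg_cong2[where f="(+)"] sum.cong refl) auto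
  also have "\<dots> = Casimir k l ((E k c d x + E l c d x) + (\<Sum>j\<in>{0..m} - {k, l}. E j c d x))"
    using additive_Casimir[of k l] assms by (simp add: additive.sum additive.add)
  also have "\<dots> = Casimir k l (diag_act m c d x)"
    by (subst diag_act_split[of k m l]) (use assms in auto)
  finally show "diag_act m c d (Casimir k l x) = Casimir k l (diag_act m c d x)" .
qed

lemma commuting_diag_act_JM:
  assumes "i \<le> m" "m \<le> n" "c < N" "d < N"
  shows "commuting (diag_act m c d) (JM i)"
  unfolding JM_def[abs_def] using assms
  by (intro commuting_sum additive_diag_act commuting_diag_act_Casimir) auto

lemma commuting_Casimir_disjoint:
  assumes "k \<le> n" "l \<le> n" "k' \<le> n" "l' \<le> n" "k \<noteq> k'" "k \<noteq> l'" "l \<noteq> k'" "l \<noteq> l'"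
  shows "commuting (Casimir k l) (Casimir k' l')"
  using assms by (intro commuting_CasimirI additive_Casimir commuting_sym[OF commuting_E_Casimir]) auto

lemma Casimir_sym:
  assumes "k \<le> n" "l \<le> n" "k \<noteq> l"
  shows "Casimir l k x = Casimir k l x"
  unfolding Casimir_def using assms E_commute
  by (subst sum.swap) (intro sum.cong refl, metis lessThan_iff)

lemma JM_split:
  assumes "i < j" "j \<le> n"
  shows "JM j x = (\<Sum>a<N. \<Sum>b<N. diag_act i a b (E j b a x)) + (\<Sum>l\<in>{i<..<j}. Casimir l j x)"
proof -
  have "{..<j} = {0..i} \<union> {i<..<j}" using assms by auto
  then have "JM j x = (\<Sum>l\<in>{0..i} \<union> {i<..<j}. Casimir l j x)"
    unfolding JM_def by simp
  also have "\<dots> = (\<Sum>l\<in>{0..i}. Casimir l j x) + (\<Sum>l\<in>{i<..<j}. Casimir l j x)"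
    by (rule sum.union_disjoint) auto
  also have "(\<Sum>l\<in>{0..i}. Casimir l j x) = (\<Sum>a<N. \<Sum>b<N. diag_act i a b (E j b a x))"
    unfolding Casimir_def diag_act_def
    by (subst sum.swap, rule sum.cong[OF refl], subst sum.swap, rule refl)
  finally show ?thesis .
qed

lemma commuting_JM_less:
  assumes "i < j" "j \<le> n"
  shows "commuting (JM i) (JM j)"
proof -
  have ad: "additive (JM i)" using assms by (intro additive_JM) auto
  have c1: "commuting (JM i) (\<lambda>x. diag_act i a b (E j b a x))" if ab: "a < N" "b < N" for a b
  proof (rule commuting_comp[of _ "diag_act i a b" "E j b a"])
    show "commuting (JM i) (diag_act i a b)" using assms ab
        by (intro commuting_sym[OF commuting_diag_act_JM]) auto
    show "commuting (JM i) (E j b a)" unfolding JM_def[abs_def] using assms ab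
      by (intro commuting_sym[OF commuting_sum] additive_E commuting_E_Casimir) auto
  qed
  have c2: "commuting (JM i) (Casimir l j)" if l: "l \<in> {i<..<j}" for l
    unfolding JM_def[abs_def] using assms l
    by (intro commuting_sym[OF commuting_sum] additive_Casimir commuting_Casimir_disjoint) auto
  have "commuting (JM i) (\<lambda>x. (\<Sum>a<N. \<Sum>b<N. diag_act i a b (E j b a x)) + (\<Sum>l\<in>{i<..<j}. Casimir l j x))"
    using c1 c2 by (intro commuting_add[OF ad] commuting_sum[OF ad]) (auto intro!: commuting_sum[OF ad])
  moreover have "(\<lambda>x. (\<Sum>a<N. \<Sum>b<N. diag_act i a b (E j b a x)) + (\<Sum>l\<in>{i<..<j}. Casimir l j x)) = JM j"
    using JM_split[OF assms] by auto
  ultimately show ?thesis by simp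
qed

lemma commuting_JM:
  assumes "i \<le> n" "j \<le> n"
  shows "commuting (JM i) (JM j)"
  using assms commuting_JM_less[of i j] commuting_JM_less[of j i] commuting_sym
  by (cases i j rule: linorder_cases) (auto simp: commuting_def)

lemma commuting_JM_if_E: "additive D \<Longrightarrow> (\<And>k a b. k \<le> n \<Longrightarrow> a < N \<Longrightarrow> b < N \<Longrightarrow> commuting D (E k a b))
   \<Longrightarrow> i \<le> n \<Longrightarrow> commuting D (JM i)"
  unfolding JM_def[abs_def] by (intro commuting_sum commuting_CasimirI) auto

lemma commuting_diag_act_if_E: "additive D \<Longrightarrow> (\<And>k a b. k \<le> n \<Longrightarrow> a < N \<Longrightarrow> b < N \<Longrightarrow> commuting D (E k a b))
   \<Longrightarrow> m \<le> n \<Longrightarrow> a < N \<Longrightarrow> b < N \<Longrightarrow> commuting D (diag_act m a b)"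
  unfolding diag_act_def[abs_def] by (intro commuting_sum) auto

end

section \<open>The gl_N-action on \<open>M \<otimes> V\<^sup>\<otimes>\<^sup>A\<close> in coordinates\<close>

lemma valid_list_update: "valid N n ps \<Longrightarrow> b < N \<Longrightarrow> valid N n (ps[j := b])"
  unfolding valid_def by (auto dest: set_update_subset_insert[THEN subsetD])

lemma valid_nth: "valid N n ps \<Longrightarrow> j < n \<Longrightarrow> ps ! j < N"
  unfolding valid_def by auto

lemma valid_length: "valid N n ps \<Longrightarrow> length ps = n"
  unfolding valid_def by auto

locale gl_rep =
  fixes N :: nat and smul :: "complex \<Rightarrow> 'm::ab_group_add \<Rightarrow> 'm" and act :: "nat \<Rightarrow> nat \<Rightarrow> 'm \<Rightarrow> 'm"
  assumes gl_module: "gl_module N smul act"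
begin

sublocale M: module smul
  using gl_module unfolding gl_module_def by auto

lemma act_add: "i < N \<Longrightarrow> j < N \<Longrightarrow> act i j (x + y) = act i j x + act i j y"
  using gl_module unfolding gl_module_def by blast

lemma act_smul: "i < N \<Longrightarrow> j < N \<Longrightarrow> act i j (smul c x) = smul c (act i j x)"
  using gl_module unfolding gl_module_def by blast

lemma act_bracket: "i < N \<Longrightarrow> j < N \<Longrightarrow> k < N \<Longrightarrow> l < N \<Longrightarrow>
  act i j (act k l x) = act k l (act i j x) + (if j = k then act i l x else 0)
      - (if l = i then act k j x else 0)"
  using gl_module unfolding gl_module_def by (simp add: algebra_simps)

lemma additive_act: "i < N \<Longrightarrow> j < N \<Longrightarrow> additive (act i j)"
  by (simp add: additive_def act_add)

lemma act_zero [simp]: "i < N \<Longrightarrow> j < N \<Longrightarrow> act i j 0 = 0"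
  by (rule additive.zero[OF additive_act])

lemma act_minus [simp]: "i < N \<Longrightarrow> j < N \<Longrightarrow> act i j (- x) = - act i j x"
  by (rule additive.minus[OF additive_act])

lemma act_sum: "i < N \<Longrightarrow> j < N \<Longrightarrow> act i j (\<Sum>k\<in>I. f k) = (\<Sum>k\<in>I. act i j (f k))"
  using additive.sum[OF additive_act] .

abbreviation E_at :: "int list \<Rightarrow> nat \<Rightarrow> nat \<Rightarrow> nat \<Rightarrow> (nat list \<Rightarrow> 'm) \<Rightarrow> nat list \<Rightarrow> 'm" where
  "E_at A \<equiv> facact N act A"

lemma additive_E_at: "a < N \<Longrightarrow> b < N \<Longrightarrow> additive (E_at A k a b)"
  unfolding additive_def facact_def by (auto simp: act_add fun_eq_iff)

lemma E_at_0: "E_at A 0 a b x ps = (if valid N (length A) ps then act a b (x ps) else 0)"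
  by (simp add: facact_def)

lemma E_at_V: "A ! j = 1 \<Longrightarrow>
   E_at A (Suc j) a b x ps = (if valid N (length A) ps \<and> ps ! j = a then x (ps[j := b]) else 0)"
  by (simp add: facact_def)

lemma E_at_Vdual: "A ! j \<noteq> 1 \<Longrightarrow>
   E_at A (Suc j) a b x ps = (if valid N (length A) ps \<and> ps ! j = b then - x (ps[j := a]) else 0)"
  by (simp add: facact_def)

lemma E_at_invalid: "\<not> valid N (length A) ps \<Longrightarrow> E_at A k a b y ps = 0"
  by (simp add: facact_def)

lemma E_at_commute:
  assumes "k \<le> length A" "l \<le> length A" "k \<noteq> l" "a < N" "b < N" "c < N" "d < N"
  shows "E_at A k a b (E_at A l c d x) = E_at A l c d (E_at A k a b x)"
proof (rule ext)
  fix ps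
  show "E_at A k a b (E_at A l c d x) ps = E_at A l c d (E_at A k a b x) ps"
  proof (cases k)
    case k: 0
    then obtain j where l: "l = Suc j" using assms by (cases l) auto
    show ?thesis
      by (cases "A ! j = 1")
          (use k l assms in \<open>simp_all add: E_at_0 E_at_V E_at_Vdual valid_list_update\<close>)
  next
    case k: (Suc i)
    show ?thesis
    proof (cases l)
      case l: 0
      show ?thesis
        by (cases "A ! i = 1")
            (use k l assms in \<open>simp_all add: E_at_0 E_at_V E_at_Vdual valid_list_update\<close>)
    next
      case l: (Suc j)
      have ij: "i \<noteq> j" using k l assms by auto
      show ?thesis
        by (cases "A ! i = 1"; cases "A ! j = 1")
           (use k l ij assms in \<open>simp_all add: E_at_0 E_at_V E_at_Vdual valid_list_update
              nth_list_update list_update_swap[OF ij]\<close>)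
    qed
  qed
qed

lemma E_at_bracket:
  assumes "k \<le> length A" "a < N" "b < N" "c < N" "d < N"
  shows "E_at A k a b (E_at A k c d x) = E_at A k c d (E_at A k a b x)
    + (if b = c then E_at A k a d x else 0) - (if d = a then E_at A k c b x else 0)"
proof (rule ext)
  fix ps
  show "E_at A k a b (E_at A k c d x) ps = (E_at A k c d (E_at A k a b x)
    + (if b = c then E_at A k a d x else 0) - (if d = a then E_at A k c b x else 0)) ps"
  proof (cases k)
    case k: 0
    then show ?thesis
      using act_bracket[of a b c d "x ps"] assms by (simp add: E_at_0 if_distribR)
  next
    case k: (Suc j)
    have j: "valid N (length A) ps \<Longrightarrow> j < length ps" using assms k by (simp add: valid_def)
    show ?thesis
      by (cases "A ! j = 1")
          (use k j assms in \<open>auto simp add: E_at_V E_at_Vdual valid_list_update if_distribR\<close>)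
  qed
qed

sublocale factor_actions N "length A" "E_at A" for A
  by (rule factor_actions.intro; rule additive_E_at E_at_commute E_at_bracket; assumption)

end

section \<open>The operators \<open>s\<^sub>i\<close> and \<open>e\<^sub>i\<close>\<close>

definition swap_at :: "'a list \<Rightarrow> nat \<Rightarrow> 'a list" where
  "swap_at ps j = ps[j := ps ! Suc j, Suc j := ps ! j]"

lemma length_swap_at[simp]: "length (swap_at ps j) = length ps"
  by (simp add: swap_at_def)

lemma nth_swap_at: "Suc j < length ps \<Longrightarrow> swap_at ps j ! k
    = (if k = j then ps ! Suc j else if k = Suc j then ps ! j else ps ! k)"
  by (auto simp: swap_at_def nth_list_update)

lemma swap_at_update_fst: "Suc j < length ps \<Longrightarrow> (swap_at ps j)[j := b] = swap_at (ps[Suc j := b]) j"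
  by (auto simp: list_eq_iff_nth_eq nth_swap_at nth_list_update)
lemma swap_at_update_snd: "Suc j < length ps \<Longrightarrow> (swap_at ps j)[Suc j := b] = swap_at (ps[j := b]) j"
  by (auto simp: list_eq_iff_nth_eq nth_swap_at nth_list_update)
lemma swap_at_update_other:
    "Suc j < length ps \<Longrightarrow> l < length ps \<Longrightarrow> l \<noteq> j \<Longrightarrow> l \<noteq> Suc j \<Longrightarrow> (swap_at ps j)[l := b]
    = swap_at (ps[l := b]) j"
  by (auto simp: list_eq_iff_nth_eq swap_at_def nth_list_update)

lemma seq_swap_eq_swap_at: "seq_swap A (Suc j) = swap_at A j"
  by (simp add: seq_swap_def swap_at_def)

lemma valid_swap_at: "valid N n ps \<Longrightarrow> Suc j < n \<Longrightarrow> valid N n (swap_at ps j)"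
  unfolding valid_def swap_at_def by (auto dest!: set_update_subset_insert[THEN subsetD])

definition swap_factor :: "nat \<Rightarrow> nat \<Rightarrow> nat" where
  "swap_factor j k = (if k = Suc j then Suc (Suc j) else if k = Suc (Suc j) then Suc j else k)"

lemma swap_factor_Suc [simp]: "swap_factor j (Suc j) = Suc (Suc j)" "swap_factor j (Suc (Suc j)) = Suc j"
  by (simp_all add: swap_factor_def)

text \<open>Generator indices are 1-based as in the paper: \<open>s\<^sub>i\<close> and \<open>e\<^sub>i\<close> with \<open>i = Suc j\<close> act on
  the list positions \<open>j\<close> and \<open>Suc j\<close>.\<close>

lemma sop_Suc: "sop N n (Suc j) x ps = (if valid N n ps then x (swap_at ps j) else 0)"
  by (simp add: sop_def swap_at_def)

lemma sop_invalid: "\<not> valid N n ps \<Longrightarrow> sop N n i x ps = 0"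
  by (simp add: sop_def)

lemma eop_invalid: "\<not> valid N n ps \<Longrightarrow> eop N n i x ps = 0"
  by (simp add: eop_def)

lemma eop_Suc: "eop N n (Suc j) x ps
    = (if valid N n ps \<and> ps ! j = ps ! Suc j then (\<Sum>p<N. x (ps[j := p, Suc j := p])) else 0)"
  by (simp add: eop_def)

definition set3 :: "'a list \<Rightarrow> nat \<Rightarrow> 'a \<Rightarrow> 'a \<Rightarrow> 'a \<Rightarrow> 'a list" where
  "set3 ps j u v w = ps[j := u, Suc j := v, Suc (Suc j) := w]"

context
  fixes ps :: "'a list" and j :: nat
  assumes L: "Suc (Suc j) < length ps"
begin
lemma set3_self: "set3 ps j (ps!j) (ps!Suc j) (ps!Suc (Suc j)) = ps"
  by (simp add: set3_def)
lemma set3_set3: "set3 (set3 ps j u v w) j u' v' w' = set3 ps j u' v' w'"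
  using L by (auto simp: set3_def list_eq_iff_nth_eq nth_list_update)
lemma nth_set3: "set3 ps j u v w ! j = u" "set3 ps j u v w ! Suc j = v"
    "set3 ps j u v w ! Suc (Suc j) = w"
  using L by (simp_all add: set3_def nth_list_update)
lemma swap_at_eq_set3: "swap_at ps j = set3 ps j (ps!Suc j) (ps!j) (ps!Suc (Suc j))"
  "swap_at ps (Suc j) = set3 ps j (ps!j) (ps!Suc (Suc j)) (ps!Suc j)"
  using L by (simp_all add: set3_def swap_at_def list_eq_iff_nth_eq nth_list_update)
lemma list_update_eq_set3: "ps[j := a] = set3 ps j a (ps!Suc j) (ps!Suc (Suc j))"
  "ps[Suc j := a] = set3 ps j (ps!j) a (ps!Suc (Suc j))"
  "ps[Suc (Suc j) := a] = set3 ps j (ps!j) (ps!Suc j) a"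
  using L by (simp_all add: set3_def list_eq_iff_nth_eq nth_list_update)
end

definition set2 :: "'a list \<Rightarrow> nat \<Rightarrow> 'a \<Rightarrow> 'a \<Rightarrow> 'a list" where
  "set2 ps j u v = ps[j := u, Suc j := v]"

definition set22 :: "'a list \<Rightarrow> nat \<Rightarrow> nat \<Rightarrow> 'a \<Rightarrow> 'a \<Rightarrow> 'a \<Rightarrow> 'a \<Rightarrow> 'a list" where
  "set22 ps j l u v u' v' = ps[j := u, Suc j := v, l := u', Suc l := v']"

lemma length_set3[simp]: "length (set3 ps j u v w) = length ps" by (simp add: set3_def)
lemma length_set2[simp]: "length (set2 ps j u v) = length ps" by (simp add: set2_def)
lemma length_set22[simp]: "length (set22 ps j l u v u' v') = length ps" by (simp add: set22_def)

lemma valid_set3: "valid N n ps \<Longrightarrow> u < N \<Longrightarrow> v < N \<Longrightarrow> w < N \<Longrightarrow> valid N n (set3 ps j u v w)"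
  unfolding set3_def by (intro valid_list_update)

lemma valid_set2: "valid N n ps \<Longrightarrow> u < N \<Longrightarrow> v < N \<Longrightarrow> valid N n (set2 ps j u v)"
  unfolding set2_def by (intro valid_list_update)

lemma valid_set22:
  "valid N n ps \<Longrightarrow> u < N \<Longrightarrow> v < N \<Longrightarrow> u' < N \<Longrightarrow> v' < N \<Longrightarrow> valid N n (set22 ps j l u v u' v')"
  unfolding set22_def by (intro valid_list_update)

context
  fixes ps :: "'a list" and j :: nat
  assumes L: "Suc j < length ps"
begin
lemma set2_self: "set2 ps j (ps!j) (ps!Suc j) = ps"
  by (simp add: set2_def)
lemma set2_set2: "set2 (set2 ps j u v) j u' v' = set2 ps j u' v'"
  using L by (auto simp: set2_def list_eq_iff_nth_eq nth_list_update)
lemma nth_set2: "set2 ps j u v ! j = u" "set2 ps j u v ! Suc j = v"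
  using L by (simp_all add: set2_def nth_list_update)
lemma swap_at_eq_set2: "swap_at ps j = set2 ps j (ps!Suc j) (ps!j)"
  using L by (simp_all add: set2_def swap_at_def)
end

context
  fixes ps :: "'a list" and j l :: nat
  assumes L: "Suc j < l" "Suc l < length ps"
begin
lemma set22_self: "set22 ps j l (ps!j) (ps!Suc j) (ps!l) (ps!Suc l) = ps"
  by (simp add: set22_def)
lemma set22_set22: "set22 (set22 ps j l u v u' v') j l a b a' b' = set22 ps j l a b a' b'"
  using L by (auto simp: set22_def list_eq_iff_nth_eq nth_list_update)
lemma nth_set22: "set22 ps j l u v u' v' ! j = u" "set22 ps j l u v u' v' ! Suc j = v"
  "set22 ps j l u v u' v' ! l = u'" "set22 ps j l u v u' v' ! Suc l = v'"
  using L by (simp_all add: set22_def nth_list_update)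
lemma swap_at_eq_set22: "swap_at ps j = set22 ps j l (ps!Suc j) (ps!j) (ps!l) (ps!Suc l)"
  "swap_at ps l = set22 ps j l (ps!j) (ps!Suc j) (ps!Suc l) (ps!l)"
  using L by (auto simp: set22_def swap_at_def list_eq_iff_nth_eq nth_list_update)
lemma list_update_eq_set22: "ps[j := a, Suc j := b] = set22 ps j l a b (ps!l) (ps!Suc l)"
  "ps[l := a, Suc l := b] = set22 ps j l (ps!j) (ps!Suc j) a b"
  using L by (auto simp: set22_def list_eq_iff_nth_eq nth_list_update)
end

lemma set3_ops:
  assumes v: "valid N n ps" and L: "Suc (Suc j) < n" and uvw: "u < N" "v < N" "w < N"
  shows
   "sop N n (Suc j) x (set3 ps j u v w) = x (set3 ps j v u w)"
   "sop N n (Suc (Suc j)) x (set3 ps j u v w) = x (set3 ps j u w v)"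
   "eop N n (Suc j) x (set3 ps j u v w) = (if u = v then (\<Sum>p<N. x (set3 ps j p p w)) else 0)"
   "eop N n (Suc (Suc j)) x (set3 ps j u v w) = (if v = w then (\<Sum>p<N. x (set3 ps j u p p)) else 0)"
proof -
  have L': "Suc (Suc j) < length ps" using v L by (simp add: valid_length)
  have L'': "Suc (Suc j) < length (set3 ps j u v w)" using L' by (simp add: length_set3)
  have vv: "valid N n (set3 ps j u v w)" using v uvw by (rule valid_set3)
  show "sop N n (Suc j) x (set3 ps j u v w) = x (set3 ps j v u w)"
    using vv L' L'' by (simp add: sop_Suc swap_at_eq_set3 nth_set3 set3_set3)
  show "sop N n (Suc (Suc j)) x (set3 ps j u v w) = x (set3 ps j u w v)"
    using vv L' L'' by (simp add: sop_Suc swap_at_eq_set3 nth_set3 set3_set3)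
  show "eop N n (Suc j) x (set3 ps j u v w) = (if u = v then (\<Sum>p<N. x (set3 ps j p p w)) else 0)"
    using vv L' L'' by (simp add: eop_Suc list_update_eq_set3 nth_set3 set3_set3 length_set3)
  show "eop N n (Suc (Suc j)) x (set3 ps j u v w) = (if v = w then (\<Sum>p<N. x (set3 ps j u p p)) else 0)"
    using vv L' L'' by (simp add: eop_Suc list_update_eq_set3 nth_set3 set3_set3 length_set3)
qed

lemma set2_ops:
  assumes v: "valid N n ps" and L: "Suc j < n" and uv: "u < N" "v < N"
  shows
   "sop N n (Suc j) x (set2 ps j u v) = x (set2 ps j v u)"
   "eop N n (Suc j) x (set2 ps j u v) = (if u = v then (\<Sum>p<N. x (set2 ps j p p)) else 0)"
proof -
  have L': "Suc j < length ps" using v L by (simp add: valid_length)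
  have L'': "Suc j < length (set2 ps j u v)" using L' by (simp add: set2_def)
  have vv: "valid N n (set2 ps j u v)" using v uv by (rule valid_set2)
  show "sop N n (Suc j) x (set2 ps j u v) = x (set2 ps j v u)"
    using vv L' L'' by (simp add: sop_Suc swap_at_eq_set2 nth_set2 set2_set2)
  show "eop N n (Suc j) x (set2 ps j u v) = (if u = v then (\<Sum>p<N. x (set2 ps j p p)) else 0)"
    using vv L' L'' by (simp add: eop_Suc nth_set2 set2_set2 flip: set2_def)
qed

lemma set22_ops:
  assumes v: "valid N n ps" and L: "Suc j < l" "Suc l < n" and uv: "u < N" "v < N" "u' < N" "v' < N"
  shows
   "sop N n (Suc j) x (set22 ps j l u v u' v') = x (set22 ps j l v u u' v')"
   "eop N n (Suc j) x (set22 ps j l u v u' v')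
       = (if u = v then (\<Sum>p<N. x (set22 ps j l p p u' v')) else 0)"
   "sop N n (Suc l) x (set22 ps j l u v u' v') = x (set22 ps j l u v v' u')"
   "eop N n (Suc l) x (set22 ps j l u v u' v')
       = (if u' = v' then (\<Sum>p<N. x (set22 ps j l u v p p)) else 0)"
proof -
  have L': "Suc l < length ps" using v L by (simp add: valid_length)
  have L'': "Suc l < length (set22 ps j l u v u' v')" using L' by (simp add: set22_def)
  have vv: "valid N n (set22 ps j l u v u' v')" using v uv by (rule valid_set22)
  show "sop N n (Suc j) x (set22 ps j l u v u' v') = x (set22 ps j l v u u' v')"
    using vv L L' L'' by (simp add: sop_Suc swap_at_eq_set22 nth_set22 set22_set22)
  show "sop N n (Suc l) x (set22 ps j l u v u' v') = x (set22 ps j l u v v' u')"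
    using vv L L' L'' by (simp add: sop_Suc swap_at_eq_set22 nth_set22 set22_set22)
  show "eop N n (Suc j) x (set22 ps j l u v u' v')
      = (if u = v then (\<Sum>p<N. x (set22 ps j l p p u' v')) else 0)"
    using vv L L' L'' by (simp add: eop_Suc list_update_eq_set22 nth_set22 set22_set22)
  show "eop N n (Suc l) x (set22 ps j l u v u' v')
      = (if u' = v' then (\<Sum>p<N. x (set22 ps j l u v p p)) else 0)"
    using vv L L' L'' by (simp add: eop_Suc list_update_eq_set22 nth_set22 set22_set22)
qed

lemma coords_eqI_set3:
  assumes L: "Suc (Suc j) < n"
    and V: "\<And>ps u v w. valid N n ps \<Longrightarrow> u < N \<Longrightarrow> v < N \<Longrightarrow> w < N \<Longrightarrow> f (set3 ps j u v w) = g (set3 ps j u v w)"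
    and I: "\<And>ps. \<not> valid N n ps \<Longrightarrow> f ps = g ps"
  shows "f = g"
proof
  fix ps show "f ps = g ps"
  proof (cases "valid N n ps")
    case True
    then show ?thesis using V[OF True, of "ps!j" "ps!Suc j" "ps!Suc (Suc j)"] True L
        by (simp add: set3_self valid_length valid_nth)
  qed (rule I)
qed

lemma coords_eqI_set2:
  assumes L: "Suc j < n"
    and V: "\<And>ps u v. valid N n ps \<Longrightarrow> u < N \<Longrightarrow> v < N \<Longrightarrow> f (set2 ps j u v) = g (set2 ps j u v)"
    and I: "\<And>ps. \<not> valid N n ps \<Longrightarrow> f ps = g ps"
  shows "f = g"
proof
  fix ps show "f ps = g ps"
  proof (cases "valid N n ps")
    case True
    have "set2 ps j (ps!j) (ps!Suc j) = ps" by (rule set2_self) (use True L in \<open>simp add: valid_length\<close>)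
    moreover have "ps!j < N" "ps!Suc j < N" using True L by (simp_all add: valid_nth)
    ultimately show ?thesis using V[OF True, of "ps!j" "ps!Suc j"] by simp
  qed (rule I)
qed

lemma coords_eqI_set22:
  assumes L: "Suc j < l" "Suc l < n"
    and V: "\<And>ps u v u' v'. valid N n ps \<Longrightarrow> u < N \<Longrightarrow> v < N \<Longrightarrow> u' < N \<Longrightarrow> v' < N \<Longrightarrow>
        f (set22 ps j l u v u' v') = g (set22 ps j l u v u' v')"
    and I: "\<And>ps. \<not> valid N n ps \<Longrightarrow> f ps = g ps"
  shows "f = g"
proof
  fix ps show "f ps = g ps"
  proof (cases "valid N n ps")
    case True
    have "set22 ps j l (ps!j) (ps!Suc j) (ps!l) (ps!Suc l) = ps" by (rule set22_self)
        (use True L in \<open>simp_all add: valid_length\<close>)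
    moreover have "ps!j < N" "ps!Suc j < N" "ps!l < N" "ps!Suc l < N" using True L
        by (simp_all add: valid_nth)
    ultimately show ?thesis using V[OF True, of "ps!j" "ps!Suc j" "ps!l" "ps!Suc l"] by simp
  qed (rule I)
qed

context gl_rep begin

lemma sop_E_at:
  assumes j: "Suc j < length A" and k: "k \<le> length A" and ab: "a < N" "b < N"
  shows "sop N (length A) (Suc j) (E_at A k a b x)
      = E_at (swap_at A j) (swap_factor j k) a b (sop N (length A) (Suc j) x)"
proof (rule ext)
  fix ps
  show "sop N (length A) (Suc j) (E_at A k a b x) ps
      = E_at (swap_at A j) (swap_factor j k) a b (sop N (length A) (Suc j) x) ps"
  proof (cases "valid N (length A) ps")
    case False then show ?thesis by (simp add: sop_Suc facact_def)
  next
    case v: True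
    then have lp: "length ps = length A" by (simp add: valid_def)
    show ?thesis
    proof (cases k)
      case 0
      then show ?thesis using v j by (simp add: sop_Suc E_at_0 swap_factor_def valid_swap_at)
    next
      case (Suc l)
      consider "l = j" | "l = Suc j" | "l \<noteq> j" "l \<noteq> Suc j" by blast
      then show ?thesis
      proof cases
        case 1
        then show ?thesis using v j Suc lp ab
          by (cases "A ! j = 1")
              (simp_all add: sop_Suc E_at_V E_at_Vdual swap_factor_def valid_swap_at
              valid_list_update nth_swap_at swap_at_update_fst swap_at_update_snd)
      next
        case 2
        then show ?thesis using v j Suc lp ab
          by (cases "A ! Suc j = 1")
              (simp_all add: sop_Suc E_at_V E_at_Vdual swap_factor_def valid_swap_at
              valid_list_update nth_swap_at swap_at_update_fst swap_at_update_snd)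
      next
        case 3
        have "l < length A" using Suc k by simp
        then show ?thesis using v j Suc lp ab 3
          by (cases "A ! l = 1")
              (simp_all add: sop_Suc E_at_V E_at_Vdual swap_factor_def valid_swap_at
              valid_list_update nth_swap_at swap_at_update_other)
      qed
    qed
  qed
qed

end

context
  fixes x :: "nat list \<Rightarrow> 'a::comm_monoid_add"
begin

lemma sop_braid:
  assumes "Suc (Suc j) < n"
  shows "sop N n (Suc j) (sop N n (Suc (Suc j)) (sop N n (Suc j) x))
       = sop N n (Suc (Suc j)) (sop N n (Suc j) (sop N n (Suc (Suc j)) x))"
  by (rule coords_eqI_set3[where N = N, OF assms]) (simp_all add: assms set3_ops sop_invalid)

lemma sop_eop_Suc_eop:
  assumes "Suc (Suc j) < n"
  shows "sop N n (Suc j) (eop N n (Suc (Suc j)) (eop N n (Suc j) x))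
      = sop N n (Suc (Suc j)) (eop N n (Suc j) x)"
  by (rule coords_eqI_set3[where N = N, OF assms]) (simp_all add: assms set3_ops sop_invalid eop_invalid)

lemma eop_eop_Suc_sop:
  assumes "Suc (Suc j) < n"
  shows "eop N n (Suc j) (eop N n (Suc (Suc j)) (sop N n (Suc j) x))
      = eop N n (Suc j) (sop N n (Suc (Suc j)) x)"
  by (rule coords_eqI_set3[where N = N, OF assms]) (simp_all add: assms set3_ops sop_invalid eop_invalid)

lemma eop_Suc_eop_sop_Suc:
  assumes "Suc (Suc j) < n"
  shows "eop N n (Suc (Suc j)) (eop N n (Suc j) (sop N n (Suc (Suc j)) x))
      = eop N n (Suc (Suc j)) (sop N n (Suc j) x)"
  by (rule coords_eqI_set3[where N = N, OF assms]) (simp_all add: assms set3_ops sop_invalid eop_invalid)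

lemma sop_Suc_eop_eop_Suc:
  assumes "Suc (Suc j) < n"
  shows "sop N n (Suc (Suc j)) (eop N n (Suc j) (eop N n (Suc (Suc j)) x))
      = sop N n (Suc j) (eop N n (Suc (Suc j)) x)"
  by (rule coords_eqI_set3[where N = N, OF assms]) (simp_all add: assms set3_ops sop_invalid eop_invalid)

lemma eop_Suc_eop_eop_Suc:
  assumes "Suc (Suc j) < n"
  shows "eop N n (Suc (Suc j)) (eop N n (Suc j) (eop N n (Suc (Suc j)) x)) = eop N n (Suc (Suc j)) x"
  by (rule coords_eqI_set3[where N = N, OF assms]) (simp_all add: assms set3_ops eop_invalid)

lemma eop_eop_Suc_eop:
  assumes "Suc (Suc j) < n"
  shows "eop N n (Suc j) (eop N n (Suc (Suc j)) (eop N n (Suc j) x)) = eop N n (Suc j) x"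
  by (rule coords_eqI_set3[where N = N, OF assms]) (simp_all add: assms set3_ops eop_invalid)

lemma sop_eop_same:
  assumes "Suc j < n"
  shows "sop N n (Suc j) (eop N n (Suc j) x) = eop N n (Suc j) x"
  by (rule coords_eqI_set2[where N = N, OF assms]) (simp_all add: assms set2_ops sop_invalid eop_invalid)

lemma eop_sop_same:
  assumes "Suc j < n"
  shows "eop N n (Suc j) (sop N n (Suc j) x) = eop N n (Suc j) x"
  by (rule coords_eqI_set2[where N = N, OF assms]) (simp_all add: assms set2_ops sop_invalid eop_invalid)

lemma sop_sop:
  assumes "Suc j < n" "x \<in> Tens N n"
  shows "sop N n (Suc j) (sop N n (Suc j) x) = x"
  by (rule coords_eqI_set2[where N = N, OF assms(1)])
      (use assms in \<open>simp_all add: set2_ops sop_invalid Tens_def\<close>)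

lemma sop_sop_far:
  assumes "Suc j < l" "Suc l < n"
  shows "sop N n (Suc j) (sop N n (Suc l) x) = sop N n (Suc l) (sop N n (Suc j) x)"
  by (rule coords_eqI_set22[where N = N, OF assms]) (simp_all add: assms set22_ops sop_invalid)

lemma sop_eop_far:
  assumes "Suc j < l" "Suc l < n"
  shows "sop N n (Suc j) (eop N n (Suc l) x) = eop N n (Suc l) (sop N n (Suc j) x)"
  by (rule coords_eqI_set22[where N = N, OF assms])
      (simp_all add: assms set22_ops sop_invalid eop_invalid)

lemma eop_sop_far:
  assumes "Suc j < l" "Suc l < n"
  shows "eop N n (Suc j) (sop N n (Suc l) x) = sop N n (Suc l) (eop N n (Suc j) x)"
  by (rule coords_eqI_set22[where N = N, OF assms])
      (simp_all add: assms set22_ops sop_invalid eop_invalid)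

lemma eop_eop_far:
  assumes "Suc j < l" "Suc l < n"
  shows "eop N n (Suc j) (eop N n (Suc l) x) = eop N n (Suc l) (eop N n (Suc j) x)"
proof (rule coords_eqI_set22[where N = N, OF assms])
  fix ps u v u' v' assume "valid N n ps" "u < N" "v < N" "u' < N" "v' < N"
  then show "eop N n (Suc j) (eop N n (Suc l) x) (set22 ps j l u v u' v')
      = eop N n (Suc l) (eop N n (Suc j) x) (set22 ps j l u v u' v')"
    using assms by (simp add: set22_ops) (intro impI sum.swap)
qed (simp add: eop_invalid)

end

lemma (in gl_rep) eop_eop:
  assumes "Suc j < n"
  shows "eop N n (Suc j) (eop N n (Suc j) x) = (\<lambda>ps. smul (of_nat N) (eop N n (Suc j) x ps))"
  by (rule coords_eqI_set2[where N = N, OF assms])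
      (simp_all add: assms set2_ops eop_invalid M.sum_constant_scale)

lemma sum_apply: "(\<Sum>i\<in>I. f i) ps = (\<Sum>i\<in>I. f i ps)"
  by (induction I rule: infinite_finite_induct) auto

lemma sum_if_const: "(\<Sum>b\<in>I. if P then f b else 0) = (if P then (\<Sum>b\<in>I. f b) else 0)"
  by simp

lemma minus_if_zero: "- (if P then t else 0) = (if P then - t else (0::'a::group_add))"
  by simp

context
  fixes ps :: "'a list" and j :: nat
  assumes L: "Suc j < length ps"
begin
lemma set2_update: "(set2 ps j u v)[j := b] = set2 ps j b v"
    "(set2 ps j u v)[Suc j := b] = set2 ps j u b"
  using L by (auto simp: set2_def list_eq_iff_nth_eq nth_list_update)
end

context gl_rep begin

context fixes x :: "nat list \<Rightarrow> 'm" begin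

lemma E_at_set2:
  assumes v: "valid N (length A) ps" and L: "Suc j < length A" and uv: "u < N" "v < N" "a < N" "b < N"
  shows "A ! j = 1 \<Longrightarrow> E_at A (Suc j) a b y (set2 ps j u v) = (if u = a then y (set2 ps j b v) else 0)"
    "A ! j \<noteq> 1 \<Longrightarrow> E_at A (Suc j) a b y (set2 ps j u v) = (if u = b then - y (set2 ps j a v) else 0)"
    "A ! Suc j = 1 \<Longrightarrow> E_at A (Suc (Suc j)) a b y (set2 ps j u v)
        = (if v = a then y (set2 ps j u b) else 0)"
    "A ! Suc j \<noteq> 1 \<Longrightarrow> E_at A (Suc (Suc j)) a b y (set2 ps j u v)
        = (if v = b then - y (set2 ps j u a) else 0)"
proof -
  have L': "Suc j < length ps" using v L by (simp add: valid_length)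
  have vv: "valid N (length A) (set2 ps j u v)" using v uv(1,2) by (rule valid_set2)
  show "A ! j = 1 \<Longrightarrow> E_at A (Suc j) a b y (set2 ps j u v) = (if u = a then y (set2 ps j b v) else 0)"
    using vv L' by (simp add: E_at_V nth_set2 set2_update)
  show "A ! j \<noteq> 1 \<Longrightarrow> E_at A (Suc j) a b y (set2 ps j u v) = (if u = b then - y (set2 ps j a v) else 0)"
    using vv L' by (simp add: E_at_Vdual nth_set2 set2_update)
  show "A ! Suc j = 1 \<Longrightarrow> E_at A (Suc (Suc j)) a b y (set2 ps j u v)
      = (if v = a then y (set2 ps j u b) else 0)"
    using vv L' by (simp add: E_at_V nth_set2 set2_update)
  show "A ! Suc j \<noteq> 1 \<Longrightarrow> E_at A (Suc (Suc j)) a b y (set2 ps j u v)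
      = (if v = b then - y (set2 ps j u a) else 0)"
    using vv L' by (simp add: E_at_Vdual nth_set2 set2_update)
qed

lemma eop_pair_action:
  assumes L: "Suc j < length A" and ty: "(A ! j = 1) \<noteq> (A ! Suc j = 1)" and ab: "a < N" "b < N"
  shows "eop N (length A) (Suc j) (E_at A (Suc j) a b x + E_at A (Suc (Suc j)) a b x) = 0"
proof (rule coords_eqI_set2[where N = N, OF L])
  fix ps u v assume v: "valid N (length A) ps" and uv: "u < N" "v < N"
  show "eop N (length A) (Suc j) (E_at A (Suc j) a b x + E_at A (Suc (Suc j)) a b x) (set2 ps j u v)
      = 0 (set2 ps j u v)"
    using ty ab uv v L by (cases "A ! j = 1") (simp_all add: set2_ops E_at_set2 sum.distrib)
qed (simp add: eop_Suc)

lemma pair_action_eop: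
  assumes L: "Suc j < length A" and ty: "(A ! j = 1) \<noteq> (A ! Suc j = 1)" and ab: "a < N" "b < N"
  shows "E_at A (Suc j) a b (eop N (length A) (Suc j) x)
      + E_at A (Suc (Suc j)) a b (eop N (length A) (Suc j) x) = 0"
proof (rule coords_eqI_set2[where N = N, OF L])
  fix ps u v assume v: "valid N (length A) ps" and uv: "u < N" "v < N"
  show "(E_at A (Suc j) a b (eop N (length A) (Suc j) x)
      + E_at A (Suc (Suc j)) a b (eop N (length A) (Suc j) x)) (set2 ps j u v) = 0 (set2 ps j u v)"
    using ty ab uv v L by (cases "A ! j = 1") (auto simp add: set2_ops E_at_set2)
qed (simp add: E_at_invalid)

lemma Casimir_adjacent_same:
  assumes L: "Suc j < length A" and ty: "(A ! j = 1) = (A ! Suc j = 1)"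
  shows "Casimir A (Suc j) (Suc (Suc j)) x = sop N (length A) (Suc j) x"
proof (rule coords_eqI_set2[where N = N, OF L])
  fix ps u v assume v: "valid N (length A) ps" and uv: "u < N" "v < N"
  show "Casimir A (Suc j) (Suc (Suc j)) x (set2 ps j u v) = sop N (length A) (Suc j) x (set2 ps j u v)"
    unfolding Casimir_def
    using ty uv v L by (cases "A ! j = 1")
        (simp_all add: set2_ops E_at_set2 sum_apply sum_if_const minus_if_zero)
qed (simp add: Casimir_def sum_apply E_at_invalid sop_Suc)

lemma Casimir_adjacent_mixed:
  assumes L: "Suc j < length A" and ty: "(A ! j = 1) \<noteq> (A ! Suc j = 1)"
  shows "Casimir A (Suc j) (Suc (Suc j)) x = - eop N (length A) (Suc j) x"
proof (rule coords_eqI_set2[where N = N, OF L])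
  fix ps u v assume v: "valid N (length A) ps" and uv: "u < N" "v < N"
  show "Casimir A (Suc j) (Suc (Suc j)) x (set2 ps j u v)
      = (- eop N (length A) (Suc j) x) (set2 ps j u v)"
    unfolding Casimir_def
    using ty uv v L by (cases "A ! j = 1")
        (simp_all add: set2_ops E_at_set2 sum_apply sum_negf sum_if_const minus_if_zero)
qed (simp add: Casimir_def sum_apply E_at_invalid eop_Suc)

lemma eop_E_at_other:
  assumes L: "Suc j < length A" and k: "k \<le> length A" "k \<noteq> Suc j" "k \<noteq> Suc (Suc j)"
    and B: "length B = length A" "k = 0 \<or> B ! (k - 1) = A ! (k - 1)" and ab: "a < N" "b < N"
  shows "eop N (length A) (Suc j) (E_at A k a b x) = E_at B k a b (eop N (length A) (Suc j) x)"
proof (rule ext)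
  fix ps
  show "eop N (length A) (Suc j) (E_at A k a b x) ps = E_at B k a b (eop N (length A) (Suc j) x) ps"
  proof (cases "valid N (length A) ps")
    case False then show ?thesis using B by (simp add: eop_Suc facact_def)
  next
    case v: True
    have lp: "length ps = length A" using v by (simp add: valid_length)
    show ?thesis
    proof (cases k)
      case 0
      then show ?thesis using v B ab by (simp add: eop_Suc E_at_0 valid_list_update act_sum)
    next
      case (Suc l)
      have l: "l \<noteq> j" "l \<noteq> Suc j" "l < length ps" using k Suc lp by auto
      have sw: "\<And>p c. ps[j := p, Suc j := p, l := c] = ps[l := c, j := p, Suc j := p]"
        using l L lp by (auto simp: list_eq_iff_nth_eq nth_list_update)
      have Bl: "B ! l = A ! l" using B Suc by simp
      show ?thesis
      proof (cases "A ! l = 1")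
        case True
        then show ?thesis using v B ab l Bl Suc
          by (cases "ps ! l = a") (simp_all add: eop_Suc E_at_V valid_list_update nth_list_update sw)
      next
        case False
        then show ?thesis using v B ab l Bl Suc
          by (cases "ps ! l = b")
              (simp_all add: eop_Suc E_at_Vdual valid_list_update nth_list_update sw sum_negf)
      qed
    qed
  qed
qed

end

section \<open>The operators \<open>y\<^sub>i\<close>\<close>

definition halfN :: "int list \<Rightarrow> (nat list \<Rightarrow> 'm) \<Rightarrow> nat list \<Rightarrow> 'm" where
  "halfN A x = (\<lambda>ps. if valid N (length A) ps then smul (of_nat N / 2) (x ps) else 0)"

lemma Omega_eq_Casimir: "Omega N act A k l x = Casimir A k l x"
  by (simp add: Omega_def Casimir_def sum_apply fun_eq_iff)

lemma glact_eq_diag_act: "glact N act A a b x = diag_act A (length A) a b x"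
  by (simp add: glact_def diag_act_def sum_apply fun_eq_iff)

lemma JM_invalid: "\<not> valid N (length A) ps \<Longrightarrow> JM A i x ps = 0"
  by (simp add: JM_def Casimir_def sum_apply E_at_invalid)

lemma yop_eq_JM: "yop N smul act A i x = JM A i x + halfN A x"
  by (auto simp: yop_def halfN_def JM_def Omega_eq_Casimir sum_apply fun_eq_iff
      JM_invalid[unfolded JM_def sum_apply])

lemma additive_sop: "additive (sop N n i)"
  unfolding additive_def by (simp add: sop_def fun_eq_iff)

lemma additive_eop: "additive (eop N n i)"
  unfolding additive_def by (simp add: eop_def fun_eq_iff sum.distrib)

lemma additive_halfN: "additive (halfN A)"
  unfolding additive_def by (simp add: halfN_def fun_eq_iff M.scale_right_distrib)

lemma commuting_halfN_E_at: "a < N \<Longrightarrow> b < N \<Longrightarrow> commuting (halfN A) (E_at A k a b)"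
  unfolding commuting_def
proof
  fix x assume ab: "a < N" "b < N"
  show "halfN A (E_at A k a b x) = E_at A k a b (halfN A x)"
  proof (rule ext)
    fix ps show "halfN A (E_at A k a b x) ps = E_at A k a b (halfN A x) ps"
    proof (cases k)
      case 0 then show ?thesis using ab by (simp add: halfN_def E_at_0 act_smul)
    next
      case (Suc l) then show ?thesis using ab
        by (cases "A ! l = 1") (auto simp: halfN_def E_at_V E_at_Vdual valid_list_update)
    qed
  qed
qed

lemma sop_Tens: "sop N n i x \<in> Tens N n" by (simp add: Tens_def sop_def)
lemma eop_Tens: "eop N n i x \<in> Tens N n" by (simp add: Tens_def eop_def)
lemma yop_Tens: "yop N smul act A i x \<in> Tens N (length A)" by (simp add: Tens_def yop_def)

lemma sop_smul: "sop N n i (\<lambda>ps. smul c (x ps)) = (\<lambda>ps. smul c (sop N n i x ps))"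
  by (simp add: sop_def fun_eq_iff)
lemma eop_smul: "eop N n i (\<lambda>ps. smul c (x ps)) = (\<lambda>ps. smul c (eop N n i x ps))"
  by (simp add: eop_def fun_eq_iff M.scale_sum_right)

lemma E_at_smul: "a < N \<Longrightarrow> b < N \<Longrightarrow> E_at A k a b (\<lambda>ps. smul c (x ps)) = (\<lambda>ps. smul c (E_at A k a b x ps))"
  unfolding facact_def by (auto simp: fun_eq_iff act_smul)

lemma commuting_smul_E_at: "a < N \<Longrightarrow> b < N \<Longrightarrow> commuting (\<lambda>x ps. smul c (x ps)) (E_at A k a b)"
  unfolding commuting_def using E_at_smul by simp

lemma additive_smul: "additive (\<lambda>x ps. smul c (x ps))"
  unfolding additive_def by (simp add: fun_eq_iff M.scale_right_distrib)


lemma yop_diag_act: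
  fixes x :: "nat list \<Rightarrow> 'm"
  assumes "i \<le> length A" "a < N" "b < N"
  shows "yop N smul act A i (diag_act A (length A) a b x)
      = diag_act A (length A) a b (yop N smul act A i x)"
proof -
  have c1: "commuting (diag_act A (length A) a b) (JM A i)" using assms
      by (intro commuting_diag_act_JM) auto
  have c2: "commuting (halfN A) (diag_act A (length A) a b)" using assms
      by (intro commuting_diag_act_if_E additive_halfN commuting_halfN_E_at) auto
  have ad: "additive (diag_act A (length A) a b)" using assms by (intro additive_diag_act) auto
  show ?thesis using c1 c2 ad unfolding yop_eq_JM commuting_def additive_def by simp
qed

lemma sop_sum: "sop N n i (\<Sum>k\<in>I. (f k :: nat list \<Rightarrow> 'm)) = (\<Sum>k\<in>I. sop N n i (f k))"
  by (rule additive.sum[OF additive_sop])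
lemma eop_sum: "eop N n i (\<Sum>k\<in>I. (f k :: nat list \<Rightarrow> 'm)) = (\<Sum>k\<in>I. eop N n i (f k))"
  by (rule additive.sum[OF additive_eop])

lemma sop_diag_act:
  fixes x :: "nat list \<Rightarrow> 'm"
  assumes j: "Suc j < length A" and ab: "a < N" "b < N"
  shows "sop N (length A) (Suc j) (diag_act A (length A) a b x)
      = diag_act (swap_at A j) (length (swap_at A j)) a b (sop N (length A) (Suc j) x)"
proof -
  have "sop N (length A) (Suc j) (diag_act A (length A) a b x)
      = (\<Sum>k\<in>{0..length A}. E_at (swap_at A j) (swap_factor j k) a b (sop N (length A) (Suc j) x))"
    unfolding diag_act_def using j ab by (simp add: sop_sum sop_E_at)
  also have "\<dots> = (\<Sum>k\<in>{0..length A}. E_at (swap_at A j) k a b (sop N (length A) (Suc j) x))"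
    by (rule sum.reindex_bij_witness[where i="swap_factor j" and j="swap_factor j"])
        (use j in \<open>auto simp: swap_factor_def\<close>)
  finally show ?thesis unfolding diag_act_def by simp
qed

lemma eop_diag_act:
  fixes x :: "nat list \<Rightarrow> 'm"
  assumes j: "Suc j < length A" and ab: "a < N" "b < N"
    and tyA: "(A ! j = 1) \<noteq> (A ! Suc j = 1)" and tyB: "(B ! j = 1) \<noteq> (B ! Suc j = 1)"
    and lB: "length B = length A" and oth: "\<And>l. l < length A \<Longrightarrow> l \<noteq> j \<Longrightarrow> l \<noteq> Suc j \<Longrightarrow> B ! l = A ! l"
  shows "eop N (length A) (Suc j) (diag_act A (length A) a b x)
      = diag_act B (length B) a b (eop N (length A) (Suc j) x)"
proof -
  let ?R = "{0..length A} - {Suc j, Suc (Suc j)}"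
  have "eop N (length A) (Suc j) (diag_act A (length A) a b x)
      = eop N (length A) (Suc j) (E_at A (Suc j) a b x + E_at A (Suc (Suc j)) a b x)
      + (\<Sum>k\<in>?R. eop N (length A) (Suc j) (E_at A k a b x))"
    using j by (subst diag_act_split[of "Suc j" _ "Suc (Suc j)"])
        (auto simp: eop_sum additive.add[OF additive_eop])
  also have "eop N (length A) (Suc j) (E_at A (Suc j) a b x + E_at A (Suc (Suc j)) a b x) = 0"
    by (rule eop_pair_action[OF j tyA ab])
  also have "(\<Sum>k\<in>?R. eop N (length A) (Suc j) (E_at A k a b x))
      = (\<Sum>k\<in>?R. E_at B k a b (eop N (length A) (Suc j) x))"
  proof (rule sum.cong[OF refl])
    fix k assume k: "k \<in> ?R"
    show "eop N (length A) (Suc j) (E_at A k a b x) = E_at B k a b (eop N (length A) (Suc j) x)"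
    proof (rule eop_E_at_other[OF j _ _ _ lB _ ab])
      show "k = 0 \<or> B ! (k - 1) = A ! (k - 1)" using k oth by (cases k) auto
    qed (use k in auto)
  qed
  also have "(\<Sum>k\<in>?R. E_at B k a b (eop N (length A) (Suc j) x))
      = diag_act B (length B) a b (eop N (length A) (Suc j) x)"
  proof -
    have "diag_act B (length B) a b (eop N (length A) (Suc j) x)
        = (E_at B (Suc j) a b (eop N (length A) (Suc j) x)
        + E_at B (Suc (Suc j)) a b (eop N (length A) (Suc j) x))
      + (\<Sum>k\<in>?R. E_at B k a b (eop N (length A) (Suc j) x))"
      using j lB by (subst diag_act_split[of "Suc j" _ "Suc (Suc j)"]) auto
    also have "E_at B (Suc j) a b (eop N (length A) (Suc j) x)
        + E_at B (Suc (Suc j)) a b (eop N (length A) (Suc j) x) = 0"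
      using pair_action_eop[of j B a b x] j lB tyB ab by simp
    finally show ?thesis by simp
  qed
  finally show ?thesis by simp
qed


context fixes x :: "nat list \<Rightarrow> 'm" begin

lemma sop_Casimir:
  assumes j: "Suc j < length A" and kl: "k \<le> length A" "l \<le> length A"
  shows "sop N (length A) (Suc j) (Casimir A k l x)
      = Casimir (swap_at A j) (swap_factor j k) (swap_factor j l) (sop N (length A) (Suc j) x)"
proof -
  have sl: "swap_factor j l \<le> length A" using kl j by (auto simp: swap_factor_def)
  show ?thesis
    unfolding Casimir_def using j kl sl
    by (simp add: sop_sum sop_E_at)
qed

lemma sop_halfN: "Suc j < length A \<Longrightarrow> sop N (length A) (Suc j) (halfN A x)
    = halfN (swap_at A j) (sop N (length A) (Suc j) x)"
  by (simp add: sop_Suc halfN_def fun_eq_iff valid_swap_at)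

lemma sop_yop_other:
  assumes j: "Suc j < length A" and m: "m \<le> length A" "m \<noteq> Suc j" "m \<noteq> Suc (Suc j)"
  shows "sop N (length A) (Suc j) (yop N smul act A m x)
      = yop N smul act (swap_at A j) m (sop N (length A) (Suc j) x)"
proof -
  have sm: "swap_factor j m = m" using m by (simp add: swap_factor_def)
  have "sop N (length A) (Suc j) (JM A m x)
      = (\<Sum>k<m. Casimir (swap_at A j) (swap_factor j k) m (sop N (length A) (Suc j) x))"
    unfolding JM_def using j m by (simp add: sop_sum sop_Casimir sm)
  also have "\<dots> = (\<Sum>k<m. Casimir (swap_at A j) k m (sop N (length A) (Suc j) x))"
    by (rule sum.reindex_bij_witness[where i="swap_factor j" and j="swap_factor j"])
        (use m in \<open>auto simp: swap_factor_def\<close>)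
  also have "\<dots> = JM (swap_at A j) m (sop N (length A) (Suc j) x)"
    unfolding JM_def by simp
  finally show ?thesis unfolding yop_eq_JM using j
    by (simp add: additive.add[OF additive_sop] sop_halfN)
qed

lemma JM_Suc: "JM A (Suc m) y = (\<Sum>k<m. Casimir A k (Suc m) y) + Casimir A m (Suc m) y"
  unfolding JM_def by simp

lemma sop_yop_Suc:
  assumes j: "Suc j < length A"
  shows "sop N (length A) (Suc j) (yop N smul act A (Suc j) x) =
    yop N smul act (swap_at A j) (Suc (Suc j)) (sop N (length A) (Suc j) x)
        - Casimir (swap_at A j) (Suc j) (Suc (Suc j)) (sop N (length A) (Suc j) x)"
proof -
  have "sop N (length A) (Suc j) (JM A (Suc j) x)
      = (\<Sum>k<Suc j. Casimir (swap_at A j) (swap_factor j k) (Suc (Suc j))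
      (sop N (length A) (Suc j) x))"
    unfolding JM_def using j by (simp add: sop_sum sop_Casimir del: sum.lessThan_Suc)
  also have "\<dots> = (\<Sum>k<Suc j. Casimir (swap_at A j) k (Suc (Suc j)) (sop N (length A) (Suc j) x))"
    by (intro sum.cong refl) (simp add: swap_factor_def)
  finally have "sop N (length A) (Suc j) (JM A (Suc j) x)
      = JM (swap_at A j) (Suc (Suc j)) (sop N (length A) (Suc j) x)
      - Casimir (swap_at A j) (Suc j) (Suc (Suc j)) (sop N (length A) (Suc j) x)"
    by (simp add: JM_Suc[of _ "Suc j"])
  then show ?thesis unfolding yop_eq_JM using j
    by (simp add: additive.add[OF additive_sop] sop_halfN algebra_simps)
qed

lemma sop_yop_Suc_Suc:
  assumes j: "Suc j < length A"
  shows "sop N (length A) (Suc j) (yop N smul act A (Suc (Suc j)) x) =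
    yop N smul act (swap_at A j) (Suc j) (sop N (length A) (Suc j) x)
        + Casimir (swap_at A j) (Suc j) (Suc (Suc j)) (sop N (length A) (Suc j) x)"
proof -
  have "sop N (length A) (Suc j) (JM A (Suc (Suc j)) x)
      = (\<Sum>k<Suc j. Casimir (swap_at A j) (swap_factor j k) (Suc j) (sop N (length A) (Suc j) x))
     + Casimir (swap_at A j) (Suc (Suc j)) (Suc j) (sop N (length A) (Suc j) x)"
    unfolding JM_Suc using j
        by (simp add: sop_sum sop_Casimir swap_factor_def additive.add[OF additive_sop] del:
        sum.lessThan_Suc)
  also have "(\<Sum>k<Suc j. Casimir (swap_at A j) (swap_factor j k) (Suc j)
      (sop N (length A) (Suc j) x)) = JM (swap_at A j) (Suc j) (sop N (length A) (Suc j) x)"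
    unfolding JM_def by (intro sum.cong refl) (simp add: swap_factor_def del: sum.lessThan_Suc)
  also have "Casimir (swap_at A j) (Suc (Suc j)) (Suc j) (sop N (length A) (Suc j) x)
      = Casimir (swap_at A j) (Suc j) (Suc (Suc j)) (sop N (length A) (Suc j) x)"
    using j by (intro Casimir_sym) auto
  finally show ?thesis unfolding yop_eq_JM using j
    by (simp add: additive.add[OF additive_sop] sop_halfN algebra_simps fun_eq_iff)
qed

lemma eop_halfN: "eop N (length A) (Suc j) (halfN A x) = halfN B (eop N (length A) (Suc j) x)" if
    "length B = length A"
  using that by (simp add: eop_Suc halfN_def fun_eq_iff valid_list_update M.scale_sum_right)

lemma eop_Casimir_other:
  assumes j: "Suc j < length A" and km: "k \<le> length A" "m \<le> length A" "k \<noteq> Suc j" "k \<noteq> Suc (Suc j)"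
      "m \<noteq> Suc j" "m \<noteq> Suc (Suc j)"
    and lB: "length B = length A" and oth: "\<And>l. l < length A \<Longrightarrow> l \<noteq> j \<Longrightarrow> l \<noteq> Suc j \<Longrightarrow> B ! l = A ! l"
  shows "eop N (length A) (Suc j) (Casimir A k m x) = Casimir B k m (eop N (length A) (Suc j) x)"
proof -
  have tk: "k = 0 \<or> B ! (k - 1) = A ! (k - 1)" using km oth by (cases k) auto
  have tm: "m = 0 \<or> B ! (m - 1) = A ! (m - 1)" using km oth by (cases m) auto
  show ?thesis unfolding Casimir_def
    by (simp add: eop_sum eop_E_at_other[OF j km(1,3,4) lB tk] eop_E_at_other[OF j km(2,5,6) lB tm])
qed

lemma eop_Casimir_pair:
  assumes j: "Suc j < length A" and m: "m \<le> length A" "Suc (Suc j) < m" and tyA: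
      "(A ! j = 1) \<noteq> (A ! Suc j = 1)"
  shows "eop N (length A) (Suc j) (Casimir A (Suc j) m x + Casimir A (Suc (Suc j)) m x) = 0"
proof -
  let ?e = "eop N (length A) (Suc j)"
  have "?e (Casimir A (Suc j) m x + Casimir A (Suc (Suc j)) m x) =
    (\<Sum>a<N. \<Sum>b<N. ?e (E_at A (Suc j) a b (E_at A m b a x) + E_at A (Suc (Suc j)) a b (E_at A m b a x)))"
    unfolding Casimir_add_common_right by (simp add: eop_sum)
  also have "\<dots> = 0" using eop_pair_action[OF j tyA] by simp
  finally show ?thesis .
qed

lemma Casimir_pair_eop:
  assumes j: "Suc j < length B" and m: "m \<le> length B" "Suc (Suc j) < m" and tyB:
      "(B ! j = 1) \<noteq> (B ! Suc j = 1)"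
  shows "Casimir B (Suc j) m (eop N (length B) (Suc j) x)
      + Casimir B (Suc (Suc j)) m (eop N (length B) (Suc j) x) = 0"
proof -
  let ?e = "eop N (length B) (Suc j)"
  have "Casimir B (Suc j) m (?e x) + Casimir B (Suc (Suc j)) m (?e x) =
    (\<Sum>a<N. \<Sum>b<N. E_at B m b a (E_at B (Suc j) a b (?e x) + E_at B (Suc (Suc j)) a b (?e x)))"
    using j m by (intro Casimir_add_common_right_factor) auto
  also have "\<dots> = 0" using pair_action_eop[OF j tyB] by (simp add: additive.zero[OF additive_E_at])
  finally show ?thesis .
qed

text \<open>For \<open>m > i + 1\<close> the two terms of \<open>y\<^sub>m\<close> involving the factors \<open>i\<close> and \<open>i + 1\<close> add up
  to an operator annihilated by \<open>e\<^sub>i\<close> from either side; all other terms commute with \<open>e\<^sub>i\<close>.\<close>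

lemma eop_JM_other:
  assumes j: "Suc j < length A" and m: "m \<le> length A" "m \<noteq> Suc j" "m \<noteq> Suc (Suc j)"
    and tyA: "(A ! j = 1) \<noteq> (A ! Suc j = 1)" and tyB: "(B ! j = 1) \<noteq> (B ! Suc j = 1)"
    and lB: "length B = length A" and oth: "\<And>l. l < length A \<Longrightarrow> l \<noteq> j \<Longrightarrow> l \<noteq> Suc j \<Longrightarrow> B ! l = A ! l"
  shows "eop N (length A) (Suc j) (JM A m x) = JM B m (eop N (length A) (Suc j) x)"
proof (cases "m \<le> j")
  case True
  show ?thesis unfolding JM_def eop_sum
    by (intro sum.cong refl eop_Casimir_other[OF j _ _ _ _ _ _ lB oth]) (use True m in auto)
next
  case False
  then have mg: "Suc (Suc j) < m" using m by auto
  let ?R = "{..<m} - {Suc j, Suc (Suc j)}"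
  have "eop N (length A) (Suc j) (JM A m x)
      = eop N (length A) (Suc j) (Casimir A (Suc j) m x + Casimir A (Suc (Suc j)) m x)
        + (\<Sum>k\<in>?R. eop N (length A) (Suc j) (Casimir A k m x))"
    unfolding JM_def using mg
        by (simp add: sum_remove2[where a = "Suc j" and b = "Suc (Suc j)"]
        additive.add[OF additive_eop] eop_sum)
  also have "\<dots> = (Casimir B (Suc j) m (eop N (length A) (Suc j) x)
      + Casimir B (Suc (Suc j)) m (eop N (length A) (Suc j) x))
        + (\<Sum>k\<in>?R. Casimir B k m (eop N (length A) (Suc j) x))"
    using eop_Casimir_pair[OF j m(1) mg tyA] Casimir_pair_eop[where j = j and B = B and m = m] j m
        mg tyB lB
    by (simp add: eop_Casimir_other[OF j _ _ _ _ _ _ lB oth])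
  also have "\<dots> = JM B m (eop N (length A) (Suc j) x)"
    unfolding JM_def using mg by (simp add: sum_remove2[where a = "Suc j" and b = "Suc (Suc j)"])
  finally show ?thesis .
qed

lemma eop_yop_other:
  assumes j: "Suc j < length A" and m: "m \<le> length A" "m \<noteq> Suc j" "m \<noteq> Suc (Suc j)"
    and tyA: "(A ! j = 1) \<noteq> (A ! Suc j = 1)" and tyB: "(B ! j = 1) \<noteq> (B ! Suc j = 1)"
    and lB: "length B = length A" and oth: "\<And>l. l < length A \<Longrightarrow> l \<noteq> j \<Longrightarrow> l \<noteq> Suc j \<Longrightarrow> B ! l = A ! l"
  shows "eop N (length A) (Suc j) (yop N smul act A m x)
      = yop N smul act B m (eop N (length A) (Suc j) x)"
  unfolding yop_eq_JM
  by (simp add: additive.add[OF additive_eop] eop_halfN[OF lB] eop_JM_other[OF assms])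

lemma halfN_add_halfN:
    "halfN A y + halfN A y = (\<lambda>ps. if valid N (length A) ps then smul (of_nat N) (y ps) else 0)"
proof -
  have "\<And>m. smul (of_nat N / 2) m + smul (of_nat N / 2) m = smul (of_nat N) m"
    by (simp flip: M.scale_left_distrib)
  then show ?thesis by (simp add: halfN_def fun_eq_iff)
qed

lemma eop_scale_valid:
    "eop N (length A) (Suc j) (\<lambda>ps. if valid N (length A) ps then smul c (x ps) else 0)
    = (\<lambda>ps. smul c (eop N (length A) (Suc j) x ps))"
  by (simp add: eop_Suc fun_eq_iff valid_list_update M.scale_sum_right)

lemma JM_add_adjacent:
    "JM A (Suc j) y + JM A (Suc (Suc j)) y
    = (\<Sum>k<Suc j. Casimir A k (Suc j) y + Casimir A k (Suc (Suc j)) y)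
    + Casimir A (Suc j) (Suc (Suc j)) y"
  unfolding JM_def
  by (simp only: sum.lessThan_Suc[of _ "Suc j"] sum.distrib add.assoc)

lemma eop_yop_add_adjacent:
  assumes j: "Suc j < length A" and tyA: "(A ! j = 1) \<noteq> (A ! Suc j = 1)"
  shows "eop N (length A) (Suc j) (yop N smul act A (Suc j) x + yop N smul act A (Suc (Suc j)) x) = 0"
proof -
  let ?e = "eop N (length A) (Suc j)"
  have p: "?e (Casimir A k (Suc j) x + Casimir A k (Suc (Suc j)) x) = 0" if k: "k < Suc j" for k
  proof -
    have "?e (Casimir A k (Suc j) x + Casimir A k (Suc (Suc j)) x) =
       (\<Sum>a<N. \<Sum>b<N. ?e (E_at A k a b (E_at A (Suc j) b a x + E_at A (Suc (Suc j)) b a x)))"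
      using k j by (subst Casimir_add_common_left) (auto simp: eop_sum)
    also have "\<dots> = (\<Sum>a<N. \<Sum>b<N. E_at A k a b (?e (E_at A (Suc j) b a x + E_at A (Suc (Suc j)) b a x)))"
      using k j by (intro sum.cong refl eop_E_at_other) auto
    also have "\<dots> = 0" using eop_pair_action[OF j tyA] by (simp add: additive.zero[OF additive_E_at])
    finally show ?thesis .
  qed
  have o: "?e (Casimir A (Suc j) (Suc (Suc j)) x) = - (\<lambda>ps. smul (of_nat N) (?e x ps))"
    using Casimir_adjacent_mixed[OF j tyA] eop_eop[OF j] by (simp add: additive.minus[OF additive_eop])
  have "yop N smul act A (Suc j) x + yop N smul act A (Suc (Suc j)) x =
     (\<Sum>k<Suc j. Casimir A k (Suc j) x + Casimir A k (Suc (Suc j)) x)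
         + Casimir A (Suc j) (Suc (Suc j)) x + (halfN A x + halfN A x)"
    unfolding yop_eq_JM JM_add_adjacent[symmetric] by (simp add: algebra_simps)
  then show ?thesis using p o
    by (simp add: additive.add[OF additive_eop] eop_sum halfN_add_halfN eop_scale_valid)
qed

lemma yop_add_adjacent_eop:
  assumes j: "Suc j < length B" and tyB: "(B ! j = 1) \<noteq> (B ! Suc j = 1)"
  shows "yop N smul act B (Suc j) (eop N (length B) (Suc j) x)
      + yop N smul act B (Suc (Suc j)) (eop N (length B) (Suc j) x) = 0"
proof -
  let ?e = "eop N (length B) (Suc j)"
  have p: "Casimir B k (Suc j) (?e x) + Casimir B k (Suc (Suc j)) (?e x) = 0" if k: "k < Suc j" for k
  proof -
    have "Casimir B k (Suc j) (?e x) + Casimir B k (Suc (Suc j)) (?e x) =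
       (\<Sum>a<N. \<Sum>b<N. E_at B k a b (E_at B (Suc j) b a (?e x) + E_at B (Suc (Suc j)) b a (?e x)))"
      using k j by (subst Casimir_add_common_left) auto
    also have "\<dots> = 0" using pair_action_eop[OF j tyB] by (simp add: additive.zero[OF additive_E_at])
    finally show ?thesis .
  qed
  have o: "Casimir B (Suc j) (Suc (Suc j)) (?e x) = - (\<lambda>ps. smul (of_nat N) (?e x ps))"
    using Casimir_adjacent_mixed[OF j tyB, of "?e x"] eop_eop[OF j] by simp
  have d: "halfN B (?e x) + halfN B (?e x) = (\<lambda>ps. smul (of_nat N) (?e x ps))"
    unfolding halfN_add_halfN by (simp add: fun_eq_iff eop_Suc)
  have "yop N smul act B (Suc j) (?e x) + yop N smul act B (Suc (Suc j)) (?e x) =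
     (\<Sum>k<Suc j. Casimir B k (Suc j) (?e x) + Casimir B k (Suc (Suc j)) (?e x))
         + Casimir B (Suc j) (Suc (Suc j)) (?e x) + (halfN B (?e x) + halfN B (?e x))"
    unfolding yop_eq_JM JM_add_adjacent[symmetric] by (simp add: algebra_simps)
  then show ?thesis using p o d by simp
qed

lemma yop_commute:
  assumes "i \<le> length A" "k \<le> length A"
  shows "yop N smul act A i (yop N smul act A k x) = yop N smul act A k (yop N smul act A i x)"
proof -
  have c1: "commuting (JM A i) (JM A k)" using assms by (intro commuting_JM)
  have c2: "commuting (halfN A) (JM A i)" "commuting (halfN A) (JM A k)" using assms
    by (intro commuting_JM_if_E additive_halfN commuting_halfN_E_at; simp)+
  have a: "additive (JM A i)" "additive (JM A k)" "additive (halfN A)" using assms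
      by (auto intro: additive_JM additive_halfN)
  show ?thesis using c1 c2 a unfolding yop_eq_JM commuting_def additive_def by (simp add: algebra_simps)
qed

lemma yop_add: "i \<le> length A \<Longrightarrow> yop N smul act A i (y + z) = yop N smul act A i y + yop N smul act A i z"
proof -
  assume i: "i \<le> length A"
  have a: "additive (JM A i)" "additive (halfN A)" using i by (auto intro: additive_JM additive_halfN)
  then show ?thesis unfolding yop_eq_JM additive_def by (simp add: algebra_simps)
qed

lemma yop_smul: "i \<le> length A \<Longrightarrow> yop N smul act A i (\<lambda>ps. smul c (y ps))
    = (\<lambda>ps. smul c (yop N smul act A i y ps))"
proof -
  assume i: "i \<le> length A"
  have "commuting (\<lambda>x ps. smul c (x ps)) (JM A i)"
    using i by (intro commuting_JM_if_E additive_smul commuting_smul_E_at)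
  then have h: "JM A i (\<lambda>ps. smul c (y ps)) = (\<lambda>ps. smul c (JM A i y ps))"
    unfolding commuting_def by metis
  moreover have "halfN A (\<lambda>ps. smul c (y ps)) = (\<lambda>ps. smul c (halfN A y ps))"
    by (simp add: halfN_def fun_eq_iff mult_ac)
  ultimately show ?thesis unfolding yop_eq_JM by (simp add: M.scale_right_distrib fun_eq_iff)
qed

end
end

section \<open>Weight vectors of a highest weight module\<close>

locale highest_weight_rep = gl_rep N smul act for N smul and act :: "nat \<Rightarrow> nat \<Rightarrow> 'm::ab_group_add \<Rightarrow> 'm" +
  fixes v0 :: 'm and lam :: "nat \<Rightarrow> complex"
  assumes v0_weight: "\<And>i. i < N \<Longrightarrow> act i i v0 = smul (lam i) v0"
    and v0_raising: "\<And>i j. i < N \<Longrightarrow> j < N \<Longrightarrow> i < j \<Longrightarrow> act i j v0 = 0"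
    and v0_generates: "\<And>S. M.subspace S \<Longrightarrow> v0 \<in> S \<Longrightarrow> (\<And>i j x. i < N \<Longrightarrow> j < N \<Longrightarrow> x \<in> S \<Longrightarrow> act i j x \<in> S)
        \<Longrightarrow> S = UNIV"
begin

inductive_set lowering_span :: "'m set" where
  base: "v0 \<in> lowering_span"
| zero: "0 \<in> lowering_span"
| add: "x \<in> lowering_span \<Longrightarrow> y \<in> lowering_span \<Longrightarrow> x + y \<in> lowering_span"
| scale: "x \<in> lowering_span \<Longrightarrow> smul c x \<in> lowering_span"
| lower: "x \<in> lowering_span \<Longrightarrow> b < a \<Longrightarrow> a < N \<Longrightarrow> act a b x \<in> lowering_span"

lemma lowering_span_diff: "x \<in> lowering_span \<Longrightarrow> y \<in> lowering_span \<Longrightarrow> x - y \<in> lowering_span"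
proof -
  assume "x \<in> lowering_span" "y \<in> lowering_span"
  then have "x + smul (-1) y \<in> lowering_span" by (intro add scale)
  then show ?thesis by simp
qed

lemma lowering_span_if: "x \<in> lowering_span \<Longrightarrow> (if P then x else 0) \<in> lowering_span"
  by (simp add: zero)

lemma act_lowering_span: "x \<in> lowering_span \<Longrightarrow> i < N \<Longrightarrow> j < N \<Longrightarrow> act i j x \<in> lowering_span"
proof (induction x arbitrary: i j rule: lowering_span.induct)
  case base
  show ?case
  proof (cases i j rule: linorder_cases)
    case less then show ?thesis using base v0_raising by (simp add: zero)
  next
    case equal then show ?thesis using base v0_weight by (simp add: scale lowering_span.base)
  next
    case greater then show ?thesis using base by (intro lower lowering_span.base)
  qed
next
  case zero then show ?case by (simp add: lowering_span.zero)
next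
  case (add x y) then show ?case by (simp add: act_add lowering_span.add)
next
  case (scale x c) then show ?case by (simp add: act_smul lowering_span.scale)
next
  case (lower x b a)
  have "act i j (act a b x) = act a b (act i j x) + (if j = a then act i b x else 0)
      - (if b = i then act a j x else 0)"
    using lower by (intro act_bracket) auto
  moreover have "act a b (act i j x) \<in> lowering_span"
  proof -
    have "act i j x \<in> lowering_span" using lower by blast
    then show ?thesis by (rule lowering_span.lower) (use lower in auto)
  qed
  moreover have "(if j = a then act i b x else 0) \<in> lowering_span" using lower
      by (intro lowering_span_if) auto
  moreover have "(if b = i then act a j x else 0) \<in> lowering_span" using lower
      by (intro lowering_span_if) auto
  ultimately show ?case by (simp add: lowering_span_diff lowering_span.add)
qed

lemma lowering_span_UNIV: "lowering_span = UNIV"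
proof (rule v0_generates)
  show "M.subspace lowering_span" unfolding M.subspace_def by (auto intro: zero add scale)
qed (auto intro: base act_lowering_span)

definition grading :: "'m \<Rightarrow> 'm" where "grading x = (\<Sum>i<N. smul (of_nat i) (act i i x))"
definition v0_grade :: complex where "v0_grade = (\<Sum>i<N. of_nat i * lam i)"

lemma grading_add: "grading (x + y) = grading x + grading y"
  by (simp add: grading_def act_add M.scale_right_distrib sum.distrib)

lemma grading_smul: "grading (smul c x) = smul c (grading x)"
  by (simp add: grading_def act_smul M.scale_sum_right mult_ac)

lemma additive_grading: "additive grading" by (simp add: additive_def grading_add)

lemma grading_diff: "grading (x - y) = grading x - grading y"
  by (rule additive.diff[OF additive_grading])

lemma grading_v0: "grading v0 = smul v0_grade v0"
  by (simp add: grading_def v0_weight v0_grade_def M.scale_sum_left)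

lemma grading_lower:
  assumes ab: "b < a" "a < N"
  shows "grading (act a b w) = act a b (grading w) + smul (of_nat a - of_nat b) (act a b w)"
proof -
  have bN: "b < N" using ab by simp
  have e: "smul (of_nat i) (act i i (act a b w)) = smul (of_nat i) (act a b (act i i w))
      + (if i = a then smul (of_nat i) (act i b w) else 0)
      - (if b = i then smul (of_nat i) (act a i w) else 0)" if "i < N" for i
    using that ab bN by (subst act_bracket)
        (simp_all add: M.scale_right_distrib M.scale_right_diff_distrib)
  have "grading (act a b w)
      = (\<Sum>i<N. smul (of_nat i) (act a b (act i i w))
      + (if i = a then smul (of_nat i) (act i b w) else 0)
      - (if b = i then smul (of_nat i) (act a i w) else 0))"
    unfolding grading_def by (rule sum.cong[OF refl]) (simp add: e)
  also have "\<dots> = (\<Sum>i<N. smul (of_nat i) (act a b (act i i w)))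
      + (\<Sum>i<N. (if i = a then smul (of_nat i) (act i b w) else 0))
      - (\<Sum>i<N. (if b = i then smul (of_nat i) (act a i w) else 0))"
    by (simp only: sum.distrib sum_subtractf)
  also have "(\<Sum>i<N. (if i = a then smul (of_nat i) (act i b w) else 0)) = smul (of_nat a) (act a b w)"
    using ab by simp
  also have "(\<Sum>i<N. (if b = i then smul (of_nat i) (act a i w) else 0)) = smul (of_nat b) (act a b w)"
    using bN by simp
  also have "(\<Sum>i<N. smul (of_nat i) (act a b (act i i w))) = act a b (grading w)"
    unfolding grading_def using ab bN by (simp add: act_sum act_smul)
  finally show ?thesis by (simp add: M.scale_left_diff_distrib)
qed

definition graded_pieces :: "(nat \<times> 'm) list \<Rightarrow> bool" where
  "graded_pieces L \<longleftrightarrow> (\<forall>p\<in>set L. 1 \<le> fst p \<and> grading (snd p) = smul (v0_grade + of_nat (fst p)) (snd p))"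

definition graded_decomposition :: "'m \<Rightarrow> bool" where
  "graded_decomposition x \<longleftrightarrow> (\<exists>c L. x = smul c v0 + sum_list (map snd L) \<and> graded_pieces L)"

lemma act_sum_list: "a < N \<Longrightarrow> b < N \<Longrightarrow> act a b (sum_list xs) = sum_list (map (act a b) xs)"
  by (induction xs) (auto simp: act_add)

lemma smul_sum_list: "smul c (sum_list xs) = sum_list (map (smul c) xs)"
  by (induction xs) (auto simp: M.scale_right_distrib)

lemma graded_decomposition_lowering_span: "x \<in> lowering_span \<Longrightarrow> graded_decomposition x"
proof (induction x rule: lowering_span.induct)
  case base
  show ?case unfolding graded_decomposition_def graded_pieces_def
      by (rule exI[of _ 1], rule exI[of _ "[]"]) simp
next
  case zero
  show ?case unfolding graded_decomposition_def graded_pieces_def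
      by (rule exI[of _ 0], rule exI[of _ "[]"]) simp
next
  case (add x y)
  then obtain c1 L1 c2 L2 where "x = smul c1 v0 + sum_list (map snd L1)" "graded_pieces L1"
     "y = smul c2 v0 + sum_list (map snd L2)" "graded_pieces L2" unfolding graded_decomposition_def
         by blast
  then show ?case unfolding graded_decomposition_def
    by (intro exI[of _ "c1 + c2"] exI[of _ "L1 @ L2"])
        (auto simp: graded_pieces_def M.scale_left_distrib algebra_simps)
next
  case (scale x c)
  then obtain c1 L1 where x: "x = smul c1 v0 + sum_list (map snd L1)" "graded_pieces L1" unfolding
      graded_decomposition_def by blast
  let ?L = "map (\<lambda>p. (fst p, smul c (snd p))) L1"
  have "graded_pieces ?L" using x(2) unfolding graded_pieces_def by (auto simp: grading_smul mult_ac)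
  moreover have "smul c x = smul (c * c1) v0 + sum_list (map snd ?L)"
    using x(1) by (simp add: M.scale_right_distrib smul_sum_list comp_def)
  ultimately show ?case unfolding graded_decomposition_def by blast
next
  case (lower x b a)
  then obtain c1 L1 where x: "x = smul c1 v0 + sum_list (map snd L1)" "graded_pieces L1" unfolding
      graded_decomposition_def by blast
  let ?L = "(a - b, smul c1 (act a b v0)) # map (\<lambda>p. (fst p + (a - b), act a b (snd p))) L1"
  have ba: "b < N" using lower by simp
  have e: "grading (act a b w) = smul (\<nu> + of_nat (a - b)) (act a b w)" if "grading w = smul \<nu> w" for w \<nu>
    using grading_lower[OF lower(2,3), of w] that lower(2,3)
        by (simp add: act_smul M.scale_left_distrib of_nat_diff)
  have "graded_pieces ?L" using x(2) lower(2) unfolding graded_pieces_def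
    by (auto simp: grading_smul e[OF grading_v0] e add.assoc mult_ac add_diff_eq)
  moreover have "act a b x = smul 0 v0 + sum_list (map snd ?L)"
    using x(1) lower ba by (simp add: act_add act_smul act_sum_list comp_def)
  ultimately show ?case unfolding graded_decomposition_def by blast
qed

lemma grading_shift_sum_list:
  assumes "\<forall>p\<in>set L. 1 \<le> fst p \<and> fst p \<le> Suc D \<and> grading (snd p)
      = smul (v0_grade + of_nat (fst p)) (snd p)"
  shows "grading (sum_list (map snd L)) - smul (v0_grade + of_nat (Suc D)) (sum_list (map snd L)) =
    sum_list (map (\<lambda>p. smul (of_nat (fst p) - of_nat (Suc D)) (snd p)) (filter (\<lambda>p. fst p \<le> D) L))"
  using assms
proof (induction L)
  case Nil then show ?case by (simp add: additive.zero[OF additive_grading])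
next
  case (Cons p L)
  have IH: "grading (sum_list (map snd L)) - smul (v0_grade + of_nat (Suc D)) (sum_list (map snd L)) =
    sum_list (map (\<lambda>p. smul (of_nat (fst p) - of_nat (Suc D)) (snd p)) (filter (\<lambda>p. fst p \<le> D) L))"
    using Cons by simp
  have p: "grading (snd p) = smul (v0_grade + of_nat (fst p)) (snd p)" "fst p \<le> Suc D"
      using Cons.prems by auto
  have "grading (snd p) - smul (v0_grade + of_nat (Suc D)) (snd p)
      = smul (of_nat (fst p) - of_nat (Suc D)) (snd p)"
    using p by (simp add: M.scale_left_diff_distrib[symmetric] algebra_simps)
  moreover have "\<not> fst p \<le> D \<Longrightarrow> smul (of_nat (fst p) - of_nat (Suc D)) (snd p) = 0"
    using p(2) by (simp add: le_Suc_eq)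
  ultimately show ?case using IH
    by (auto simp: grading_add M.scale_right_distrib algebra_simps)
qed

text \<open>Induction on the top degree \<open>D\<close>: the operator \<open>grading - (v0_grade + D)\<close> multiplies \<open>w\<close> by
  \<open>-D \<noteq> 0\<close>, kills the pieces of degree \<open>D\<close> and only rescales the others.\<close>

lemma graded_pieces_sum_eq_zero:
  "\<forall>p\<in>set L. 1 \<le> fst p \<and> fst p \<le> D \<and> grading (snd p) = smul (v0_grade + of_nat (fst p)) (snd p) \<Longrightarrow>
   w = sum_list (map snd L) \<Longrightarrow> grading w = smul v0_grade w \<Longrightarrow> w = 0"
proof (induction D arbitrary: L w)
  case 0
  then have "L = []" by (cases L) auto
  then show ?case using 0 by simp
next
  case (Suc D)
  let ?D = "of_nat (Suc D) :: complex"
  let ?L = "map (\<lambda>p. (fst p, smul ((of_nat (fst p) - ?D) / (- ?D)) (snd p))) (filter (\<lambda>p. fst p \<le> D) L)"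
  have ks: "grading w - smul (v0_grade + ?D) w
      = sum_list (map (\<lambda>p. smul (of_nat (fst p) - ?D) (snd p)) (filter (\<lambda>p. fst p \<le> D) L))"
    using grading_shift_sum_list[of L D] Suc.prems by simp
  have "grading w - smul (v0_grade + ?D) w = smul (- ?D) w"
    using Suc.prems(3) by (simp add: M.scale_left_diff_distrib[symmetric] algebra_simps)
  then have "smul (- ?D) w
      = sum_list (map (\<lambda>p. smul (of_nat (fst p) - ?D) (snd p)) (filter (\<lambda>p. fst p \<le> D) L))"
    using ks by simp
  then have "smul (1 / (- ?D)) (smul (- ?D) w)
      = smul (1 / (- ?D)) (sum_list
      (map (\<lambda>p. smul (of_nat (fst p) - ?D) (snd p)) (filter (\<lambda>p. fst p \<le> D) L)))"
    by simp
  moreover have "(- 1 :: complex) \<noteq> of_nat D"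
  proof
    assume "(- 1 :: complex) = of_nat D"
    then have "of_nat (Suc D) = (0::complex)" by (metis add.right_inverse of_nat_Suc add.commute)
    then show False by (simp only: of_nat_eq_0_iff)
  qed
  ultimately have wL: "w = sum_list (map snd ?L)"
    by (simp add: smul_sum_list comp_def)
  have "\<forall>p\<in>set ?L. 1 \<le> fst p \<and> fst p \<le> D \<and> grading (snd p) = smul (v0_grade + of_nat (fst p)) (snd p)"
    using Suc.prems(1) by (auto simp: grading_smul mult_ac)
  then show ?case using Suc.IH wL Suc.prems(3) by blast
qed

lemma highest_weight_vector_unique:
  assumes w: "\<And>i. i < N \<Longrightarrow> act i i w = smul (lam i) w"
  shows "\<exists>c. w = smul c v0"
proof -
  have "graded_decomposition w" using graded_decomposition_lowering_span lowering_span_UNIV by auto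
  then obtain c L where cL: "w = smul c v0 + sum_list (map snd L)" "graded_pieces L" unfolding
      graded_decomposition_def by blast
  have hw: "grading w = smul v0_grade w" using w by (simp add: grading_def v0_grade_def M.scale_sum_left)
  let ?w = "w - smul c v0"
  have "grading ?w = smul v0_grade ?w"
    using hw by (simp add: grading_diff grading_smul grading_v0 M.scale_right_diff_distrib mult_ac)
  moreover have "?w = sum_list (map snd L)" using cL by simp
  moreover obtain D where "\<forall>p\<in>set L. fst p \<le> D"
    using finite_set[of L] by (metis finite_imageI finite_nat_set_iff_bounded_le image_eqI)
  ultimately have "?w = 0" using cL(2) unfolding graded_pieces_def
    by (intro graded_pieces_sum_eq_zero[of L D]) auto
  then show ?thesis by auto
qed

end

section \<open>The scalars \<open>\<omega>\<^sub>k(M)\<close>\<close>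

lemma valid_pair: "valid N 2 [a, b] \<longleftrightarrow> a < N \<and> b < N"
  by (auto simp: valid_def numeral_2_eq_2)

lemma valid_pairE: "valid N 2 ps \<Longrightarrow> \<exists>a b. ps = [a, b] \<and> a < N \<and> b < N"
  unfolding valid_def numeral_2_eq_2
  by (cases ps; cases "tl ps") auto

lemma valid_pair_Suc: "valid N (Suc (Suc 0)) [a, b] \<longleftrightarrow> a < N \<and> b < N"
  by (auto simp: valid_def)

lemma valid_Cons_Cons: "valid N (Suc (Suc n)) (q1 # q2 # rest) \<longleftrightarrow> q1 < N \<and> q2 < N \<and> valid N n rest"
  by (auto simp: valid_def)

context gl_rep begin

abbreviation "VVd \<equiv> [1, -1] :: int list"
abbreviation "y1_VVd \<equiv> yop N smul act VVd 1"

definition coev :: "'m \<Rightarrow> nat list \<Rightarrow> 'm" where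
  "coev m = (\<lambda>ps. if valid N 2 ps \<and> ps ! 0 = ps ! 1 then m else 0)"

definition ev :: "(nat list \<Rightarrow> 'm) \<Rightarrow> 'm" where
  "ev X = (\<Sum>i<N. X [i, i])"

lemma omega_comp_eq: "omega_comp N smul act k m = ev ((y1_VVd ^^ k) (coev m))"
  by (simp add: omega_comp_def coev_def ev_def)

lemma coev_eq_eop: "coev m = eop N 2 1 (\<lambda>ps. if ps = [0, 0] then m else 0)"
proof (rule ext)
  fix ps show "coev m ps = eop N 2 1 (\<lambda>ps. if ps = [0, 0] then m else 0) ps"
  proof (cases "valid N 2 ps")
    case True
    then obtain a b where ab: "ps = [a, b]" "a < N" "b < N" using valid_pairE by blast
    then have "0 < N" by simp
    then show ?thesis using ab by (simp add: coev_def eop_def valid_pair)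
  qed (simp add: coev_def eop_def)
qed

lemma diag_act_coev:
  assumes ab: "a < N" "b < N"
  shows "diag_act VVd (length VVd) a b (coev m) = coev (act a b m)"
proof -
  have "diag_act VVd (length VVd) a b (coev m) = (E_at VVd 1 a b (coev m) + E_at VVd 2 a b (coev m))
      + (\<Sum>k\<in>{0..length VVd} - {1, 2}. E_at VVd k a b (coev m))"
    by (rule diag_act_split) auto
  also have "E_at VVd 1 a b (coev m) + E_at VVd 2 a b (coev m) = 0"
    using pair_action_eop[of 0 VVd a b "\<lambda>ps. if ps = [0, 0] then m else 0"] ab
        by (simp add: coev_eq_eop numeral_2_eq_2)
  also have "{0..length VVd} - {1, 2} = {0::nat}" by auto
  finally have "diag_act VVd (length VVd) a b (coev m) = E_at VVd 0 a b (coev m)" by simp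
  also have "E_at VVd 0 a b (coev m) = coev (act a b m)"
    using ab by (simp add: fun_eq_iff E_at_0 coev_def numeral_2_eq_2)
  finally show ?thesis .
qed

lemma ev_diag_act:
  assumes ab: "a < N" "b < N"
  shows "ev (diag_act VVd (length VVd) a b X) = act a b (ev X)"
proof -
  have "diag_act VVd (length VVd) a b X [i, i] = act a b (X [i, i])
      + (if i = a then X [b, i] else 0) - (if i = b then X [i, a] else 0)" if "i < N" for i
    unfolding diag_act_def using that ab
    by (simp add: sum_apply numeral_2_eq_2 atLeast0_atMost_Suc add_ac E_at_0 E_at_V[of _ 0]
        E_at_Vdual[of _ "Suc 0"] valid_pair_Suc)
  then have "ev (diag_act VVd (length VVd) a b X) = (\<Sum>i<N. act a b (X [i, i]))
      + (\<Sum>i<N. (if i = a then X [b, i] else 0)) - (\<Sum>i<N. (if i = b then X [i, a] else 0))"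
    unfolding ev_def by (simp add: sum.distrib sum_subtractf)
  then show ?thesis using ab by (simp add: ev_def act_sum)
qed

lemma commuting_y1_pow_diag_act:
  assumes "a < N" "b < N"
  shows "commuting (y1_VVd ^^ k) (diag_act VVd (length VVd) a b)"
proof (rule commuting_funpow)
  show "commuting y1_VVd (diag_act VVd (length VVd) a b)"
    unfolding commuting_def using yop_diag_act[of 1 VVd a b] assms by simp
qed

lemma additive_y1_pow: "additive (y1_VVd ^^ k)"
  by (intro additive_funpow) (simp add: additive_def yop_add)

lemma commuting_y1_pow_smul: "commuting (y1_VVd ^^ k) (\<lambda>X ps. smul c (X ps))"
  by (intro commuting_funpow) (simp add: commuting_def yop_smul)

lemma omega_comp_act:
  assumes "a < N" "b < N"
  shows "act a b (omega_comp N smul act k m) = omega_comp N smul act k (act a b m)"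
proof -
  have "act a b (omega_comp N smul act k m)
      = ev (diag_act VVd (length VVd) a b ((y1_VVd ^^ k) (coev m)))"
    unfolding omega_comp_eq using assms by (simp only: ev_diag_act)
  also have "\<dots> = ev ((y1_VVd ^^ k) (diag_act VVd (length VVd) a b (coev m)))"
    using commuting_y1_pow_diag_act[OF assms, of k] by (simp only: commuting_def)
  also have "\<dots> = omega_comp N smul act k (act a b m)"
    unfolding omega_comp_eq using assms by (simp only: diag_act_coev)
  finally show ?thesis .
qed

lemma omega_comp_add:
    "omega_comp N smul act k (m + m') = omega_comp N smul act k m + omega_comp N smul act k m'"
proof -
  have "coev (m + m') = coev m + coev m'" by (simp add: coev_def fun_eq_iff)
  then show ?thesis unfolding omega_comp_eq
    by (simp only: additive.add[OF additive_y1_pow] ev_def plus_fun_apply sum.distrib)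
qed

lemma omega_comp_smul: "omega_comp N smul act k (smul c m) = smul c (omega_comp N smul act k m)"
proof -
  have "coev (smul c m) = (\<lambda>ps. smul c (coev m ps))" by (simp add: coev_def fun_eq_iff)
  then show ?thesis using commuting_y1_pow_smul unfolding omega_comp_eq commuting_def
    by (simp add: ev_def M.scale_sum_right)
qed

lemma omega_comp_0: "omega_comp N smul act 0 m = smul (of_nat N) m"
  by (simp add: omega_comp_eq ev_def coev_def valid_pair M.sum_constant_scale)

lemma yop1_Cons_Cons:
  assumes A: "length A = Suc (Suc n)" "A ! 0 = 1" and r: "valid N n rest"
    and ZW: "\<And>q1 q2. Z (q1 # q2 # rest) = W [q1, q2]"
  shows "yop N smul act A 1 Z (q1 # q2 # rest) = y1_VVd W [q1, q2]"
proof -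
  have s1: "Suc 0 - 1 = (0::nat)" by simp
  show ?thesis using A r ZW
    by (simp add: yop_def Omega_def facact_def valid_Cons_Cons valid_pair_Suc valid_Cons_Cons
        valid_def[of N 0 "[]"] s1 cong: if_cong)
qed

lemma yop1_pow_eop_Cons_Cons:
  assumes A: "length A = Suc (Suc n)" "A ! 0 = 1" and r: "valid N n rest"
  shows "(yop N smul act A 1 ^^ k) (eop N (length A) 1 x) (q1 # q2 # rest) =
     (y1_VVd ^^ k) (coev (\<Sum>p<N. x (p # p # rest))) [q1, q2]"
proof (induction k arbitrary: q1 q2)
  case 0
  show ?case using A r by (simp add: eop_Suc coev_def valid_Cons_Cons valid_pair valid_pair_Suc)
next
  case (Suc k)
  show ?case by (simp only: funpow.simps comp_apply) (rule yop1_Cons_Cons[OF A r], rule Suc.IH)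
qed

lemma eop_yop1_pow_eop:
  assumes A: "2 \<le> length A" "A ! 0 = 1" and spec: "\<And>m. omega_comp N smul act k m = smul w m"
  shows "eop N (length A) 1 ((yop N smul act A 1 ^^ k) (eop N (length A) 1 x))
      = (\<lambda>ps. smul w (eop N (length A) 1 x ps))"
proof (rule ext)
  fix ps
  obtain n where n: "length A = Suc (Suc n)" using A by (metis add_2_eq_Suc le_Suc_ex)
  show "eop N (length A) 1 ((yop N smul act A 1 ^^ k) (eop N (length A) 1 x)) ps
      = smul w (eop N (length A) 1 x ps)"
  proof (cases "valid N (length A) ps")
    case False then show ?thesis by (simp add: eop_Suc)
  next
    case True
    then obtain q1 q2 rest where ps: "ps = q1 # q2 # rest" using n
      by (cases ps; cases "tl ps") (auto simp: valid_def)
    have v: "q1 < N" "q2 < N" "valid N n rest" using True ps n by (simp_all add: valid_Cons_Cons)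
    have "eop N (length A) 1 ((yop N smul act A 1 ^^ k) (eop N (length A) 1 x)) ps =
       (if q1 = q2 then (\<Sum>p<N. (y1_VVd ^^ k) (coev (\<Sum>p<N. x (p # p # rest))) [p, p]) else 0)"
      using True ps yop1_pow_eop_Cons_Cons[OF n A(2) v(3)] by (simp add: eop_Suc)
    also have "\<dots> = (if q1 = q2 then omega_comp N smul act k (\<Sum>p<N. x (p # p # rest)) else 0)"
      by (simp add: omega_comp_eq ev_def)
    also have "\<dots> = smul w (eop N (length A) 1 x ps)"
      using True ps by (simp add: spec eop_Suc)
    finally show ?thesis .
  qed
qed

end

context highest_weight_rep begin

lemma omega_comp_scalar: "\<exists>c. \<forall>m. omega_comp N smul act k m = smul c m"
proof -
  let ?z = "omega_comp N smul act k"
  have "\<exists>c. ?z v0 = smul c v0"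
  proof (rule highest_weight_vector_unique)
    fix i assume "i < N"
    then show "act i i (?z v0) = smul (lam i) (?z v0)"
        by (simp add: omega_comp_act v0_weight omega_comp_smul)
  qed
  then obtain c where c: "?z v0 = smul c v0" by blast
  let ?K = "{m. ?z m = smul c m}"
  have "?K = UNIV"
  proof (rule v0_generates)
    show "M.subspace ?K" unfolding M.subspace_def
      by (auto simp: omega_comp_add omega_comp_smul M.scale_right_distrib mult_ac)
         (metis M.scale_zero_left M.scale_zero_right omega_comp_smul)
    show "v0 \<in> ?K" using c by simp
    show "act i j x \<in> ?K" if "i < N" "j < N" "x \<in> ?K" for i j x
      using that by (simp add: omega_comp_act[symmetric] act_smul)
  qed
  then show ?thesis by auto
qed

lemma omega_comp_omegaM: "omega_comp N smul act k m = smul (omegaM N smul act k) m"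
proof -
  have "\<forall>m. omega_comp N smul act k m = smul (omegaM N smul act k) m"
    unfolding omegaM_def by (rule someI_ex[OF omega_comp_scalar])
  then show ?thesis by blast
qed

end

section \<open>The defining relations\<close>

lemma length_seq_swap[simp]: "length (seq_swap A i) = length A"
  by (simp add: seq_swap_def)

lemma word_target_Nil[simp]: "word_target A [] = A"
  by (simp add: word_target_def)
lemma word_target_Cons[simp]: "word_target A (g # w) = gen_target (word_target A w) g"
  by (simp add: word_target_def)

lemma length_gen_target[simp]: "length (gen_target B g) = length B"
  by (cases g) auto

lemma length_word_target[simp]: "length (word_target A w) = length A"
  by (induction w) auto

lemma sign_eq_iff: "set A \<subseteq> {1, -1} \<Longrightarrow> j < length A \<Longrightarrow> k < length A
    \<Longrightarrow> (A ! j = A ! k) \<longleftrightarrow> ((A ! j = 1) = (A ! k = 1))"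
proof -
  assume a: "set A \<subseteq> {1, -1}" "j < length A" "k < length A"
  then have "A ! j \<in> {1, -1}" "A ! k \<in> {1, -1}" using nth_mem by blast+
  then show ?thesis by auto
qed

lemma seq_swap_eq: "1 \<le> i \<Longrightarrow> A ! (i - 1) = A ! i \<Longrightarrow> seq_swap A i = A"
  unfolding seq_swap_def by (metis list_update_id)

lemma gen_defined_dS: "g \<in> dS i \<Longrightarrow> gen_defined B g \<Longrightarrow> 1 \<le> i \<and> i < length B" by (auto simp: dS_def)
lemma gen_defined_dE: "g \<in> dE i \<Longrightarrow> gen_defined B g \<Longrightarrow> 1 \<le> i \<and> i < length B \<and> B ! (i - 1) \<noteq> B ! i"
    by (auto simp: dE_def)
lemma gen_target_dS: "g \<in> dS i \<Longrightarrow> gen_defined B g \<Longrightarrow> gen_target B g = seq_swap B i"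
  by (auto simp: dS_def seq_swap_eq)

lemma gen_op_dS: "g \<in> dS i \<Longrightarrow> gen_op N smul act B g = sop N (length B) i" by (auto simp: dS_def)
lemma gen_op_dE: "g \<in> dE i \<Longrightarrow> gen_op N smul act B g = eop N (length B) i" by (auto simp: dE_def)

lemma lc_ok_head_defined: "lc_ok A ((c, w) # rest) T \<Longrightarrow> word_defined A w"
  by (simp add: lc_ok_def)
lemma lc_ok_second_defined: "lc_ok A ((c, w) # (d, w2) # rest) T \<Longrightarrow> word_defined A w2"
  by (simp add: lc_ok_def)

lemma index_Suc: "1 \<le> i \<Longrightarrow> i < n \<Longrightarrow> \<exists>j. i = Suc j \<and> Suc j < n" by (cases i) auto

lemma word_target_replicate_Yg: "word_target A (replicate k (Yg i) @ w) = word_target A w"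
  by (induction k) simp_all
lemma word_op_replicate_Yg:
    "word_op N smul act A (replicate k (Yg i) @ w) x
    = (yop N smul act (word_target A w) i ^^ k) (word_op N smul act A w x)"
  by (induction k) (simp_all add: word_target_replicate_Yg)

lemma nth_swap_at_other: "l \<noteq> j \<Longrightarrow> l \<noteq> Suc j \<Longrightarrow> swap_at A j ! l = A ! l"
  by (simp add: swap_at_def nth_list_update)

lemma gen_target_dE: "b \<in> dE (Suc p) \<Longrightarrow> gen_target A b = A \<or> gen_target A b = swap_at A p"
  by (auto simp: dE_def seq_swap_eq_swap_at)

lemma mixed_target:
  assumes p: "Suc p < length A" and tyA: "(A ! p = 1) \<noteq> (A ! Suc p = 1)" and B: "B = A \<or> B = swap_at A p"
  shows "(B ! p = 1) \<noteq> (B ! Suc p = 1)" "length B = length A"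
    "\<And>l. l < length A \<Longrightarrow> l \<noteq> p \<Longrightarrow> l \<noteq> Suc p \<Longrightarrow> B ! l = A ! l"
  using B p tyA by (auto simp: nth_swap_at nth_swap_at_other)

lemma mixed_pair: "set A \<subseteq> {1, -1} \<Longrightarrow> Suc p < length A \<Longrightarrow> A ! p \<noteq> A ! Suc p
    \<Longrightarrow> (A ! p = 1) \<noteq> (A ! Suc p = 1)"
  using sign_eq_iff[of A p "Suc p"] by auto

lemma index_Suc_Suc: assumes "1 \<le> i" "i + 1 < length A" obtains p where "i = Suc p" "Suc (Suc p) < length A"
  using assms by (cases i) auto

context gl_rep begin

lemma lc_op_one: "lc_op N smul act A [(1, w)] x = word_op N smul act A w x"
  by (simp add: lc_op_def fun_eq_iff)
lemma lc_op_single: "lc_op N smul act A [(c, w)] x = (\<lambda>ps. smul c (word_op N smul act A w x ps))"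
  by (simp add: lc_op_def fun_eq_iff)
lemma lc_op_diff: "lc_op N smul act A [(1, w1), (-1, w2)] x = word_op N smul act A w1 x
    - word_op N smul act A w2 x"
  by (simp add: lc_op_def fun_eq_iff)
lemma lc_op_add: "lc_op N smul act A [(1, w1), (1, w2)] x = word_op N smul act A w1 x
    + word_op N smul act A w2 x"
  by (simp add: lc_op_def fun_eq_iff)
lemma lc_op_Nil: "lc_op N smul act A [] x = 0"
  by (simp add: lc_op_def fun_eq_iff)
lemma lc_op_minus: "lc_op N smul act A [(-1, w)] x = - word_op N smul act A w x"
  by (simp add: lc_op_def fun_eq_iff)

context
  fixes x :: "nat list \<Rightarrow> 'm" and A :: "int list" and T :: "int list" and L R :: lcomb
  assumes x: "x \<in> Tens N (length A)" and okL: "lc_ok A L T" and okR: "lc_ok A R T"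
    and signs: "set A \<subseteq> {1, -1}"
begin

lemma rel1_holds: assumes "(L, R) \<in> {(one [a, b], one []) | i a b. a \<in> dS i \<and> b \<in> dS i}"
  shows "lc_op N smul act A L x = lc_op N smul act A R x"
proof -
  obtain i a b where e: "L = one [a, b]" "R = one []" "a \<in> dS i" "b \<in> dS i" using assms by blast
  have "gen_defined A b" using lc_ok_head_defined[OF okL[unfolded e]] by simp
  then obtain j where j: "i = Suc j" "Suc j < length A" using gen_defined_dS[OF e(4)] index_Suc by blast
  show ?thesis using e j
      by (simp add: lc_op_one gen_op_dS[OF e(3)] gen_op_dS[OF e(4)] sop_sop[OF j(2) x])
qed

lemma rel2_far_holds: assumes
    "(L, R) \<in> {(one [a, b], one [c, d]) | i j a b c d. far i j \<and> a \<in> dS i \<and> b \<in> dS j \<and> c \<in> dS j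
    \<and> d \<in> dS i}"
  shows "lc_op N smul act A L x = lc_op N smul act A R x"
proof -
  obtain i k a b c d where e: "L = one [a, b]" "R = one [c, d]" "far i k" "a \<in> dS i" "b \<in> dS k"
      "c \<in> dS k" "d \<in> dS i"
    using assms by blast
  have "gen_defined A b" "gen_defined A d" using lc_ok_head_defined[OF okL[unfolded e]]
      lc_ok_head_defined[OF okR[unfolded e]] by simp_all
  then obtain p q where pq: "i = Suc p" "Suc p < length A" "k = Suc q" "Suc q < length A"
    using gen_defined_dS[OF e(5)] gen_defined_dS[OF e(7)] index_Suc by metis
  show ?thesis
  proof (cases "i + 1 < k")
    case True
    then have "Suc p < q" using pq by simp
    have "sop N (length A) i (sop N (length A) k x) = sop N (length A) k (sop N (length A) i x)"
      unfolding pq by (rule sop_sop_far) (use pq \<open>Suc p < q\<close> in simp_all)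
    then show ?thesis using e
        by (simp add: lc_op_one gen_op_dS[OF e(4)] gen_op_dS[OF e(5)] gen_op_dS[OF e(6)]
        gen_op_dS[OF e(7)])
  next
    case False
    then have "Suc q < p" using e(3) pq by (simp add: far_def)
    have "sop N (length A) k (sop N (length A) i x) = sop N (length A) i (sop N (length A) k x)"
      unfolding pq by (rule sop_sop_far) (use pq \<open>Suc q < p\<close> in simp_all)
    then show ?thesis using e
        by (simp add: lc_op_one gen_op_dS[OF e(4)] gen_op_dS[OF e(5)] gen_op_dS[OF e(6)]
        gen_op_dS[OF e(7)])
  qed
qed

lemma rel2_braid_holds: assumes "(L, R) \<in> {(one [a, b, c], one [d, e, f]) | i a b c d e f.
        a \<in> dS i \<and> b \<in> dS (i + 1) \<and> c \<in> dS i \<and> d \<in> dS (i + 1) \<and> e \<in> dS i \<and> f \<in> dS (i + 1)}"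
  shows "lc_op N smul act A L x = lc_op N smul act A R x"
proof -
  obtain i a b c d e f where e: "L = one [a, b, c]" "R = one [d, e, f]" "a \<in> dS i" "b \<in> dS (i + 1)"
      "c \<in> dS i"
    "d \<in> dS (i + 1)" "e \<in> dS i" "f \<in> dS (i + 1)"
    using assms by blast
  have dd: "gen_defined A c" "gen_defined (gen_target A c) b"
      using lc_ok_head_defined[OF okL[unfolded e]] by simp_all
  have "1 \<le> i" "i + 1 < length A" using gen_defined_dS[OF e(5) dd(1)] gen_defined_dS[OF e(4) dd(2)]
      by auto
  then obtain j where j: "i = Suc j" "Suc (Suc j) < length A" by (cases i) auto
  show ?thesis using e j
    by (simp add: lc_op_one gen_op_dS[OF e(3)] gen_op_dS[OF e(4)] gen_op_dS[OF e(5)]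
        gen_op_dS[OF e(6)] gen_op_dS[OF e(7)] gen_op_dS[OF e(8)] sop_braid)
qed

lemma rel3_holds:
  assumes om: "\<And>m. smul (\<omega> 0) m = smul (of_nat N) m"
    and rel: "(L, R) \<in> {(one [Ep i, Ep i], [(\<omega> 0, [Ep i])]) | i. True}"
  shows "lc_op N smul act A L x = lc_op N smul act A R x"
proof -
  obtain i where e: "L = one [Ep i, Ep i]" "R = [(\<omega> 0, [Ep i])]" using rel by blast
  have "gen_defined A (Ep i)" using lc_ok_head_defined[OF okL[unfolded e]] by simp
  then obtain j where j: "i = Suc j" "Suc j < length A" using index_Suc by auto
  show ?thesis using e j by (simp add: lc_op_one lc_op_single eop_eop om)
qed

lemma rel4_holds:
  assumes om: "\<And>k m. omega_comp N smul act k m = smul (\<omega> k) m"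
    and rel: "(L, R) \<in> {(one ([Ep 1] @ replicate k (Yg 1) @ [Ep 1]), [(\<omega> k, [Ep 1])]) | k.
        length A \<ge> 2 \<and> A ! 0 = 1 \<and> A ! 1 = -1}"
  shows "lc_op N smul act A L x = lc_op N smul act A R x"
proof -
  obtain k where e: "L = one ([Ep 1] @ replicate k (Yg 1) @ [Ep 1])" "R = [(\<omega> k, [Ep 1])]"
    "length A \<ge> 2" "A ! 0 = 1" using rel by blast
  have w: "word_op N smul act A ([Ep 1] @ replicate k (Yg 1) @ [Ep 1]) x =
     eop N (length A) 1 ((yop N smul act A 1 ^^ k) (eop N (length A) 1 x))"
    by (simp add: word_op_replicate_Yg word_target_replicate_Yg)
  have r: "eop N (length A) (Suc 0) ((yop N smul act A (Suc 0) ^^ k) (eop N (length A) (Suc 0) x))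
      = (\<lambda>ps. smul (\<omega> k) (eop N (length A) (Suc 0) x ps))"
    using eop_yop1_pow_eop[OF e(3,4) om] by simp
  show ?thesis using e w r by (simp add: lc_op_one lc_op_single)
qed

lemma rel2_y_holds: assumes
    "(L, R) \<in> {(one [a, Yg j], one [Yg j, b]) | i j a b. j \<noteq> i \<and> j \<noteq> i + 1 \<and> a \<in> dS i \<and> b \<in> dS i}"
  shows "lc_op N smul act A L x = lc_op N smul act A R x"
proof -
  obtain i m a b where e: "L = one [a, Yg m]" "R = one [Yg m, b]" "m \<noteq> i" "m \<noteq> i + 1" "a \<in> dS i"
      "b \<in> dS i"
    using assms by blast
  have d1: "gen_defined A (Yg m)" using lc_ok_head_defined[OF okL[unfolded e]] by simp
  have d2: "gen_defined A b" using lc_ok_head_defined[OF okR[unfolded e]] by simp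
  obtain p where p: "i = Suc p" "Suc p < length A" using gen_defined_dS[OF e(6) d2] index_Suc by blast
  have t: "gen_target A b = swap_at A p" using gen_target_dS[OF e(6) d2] p
      by (simp add: seq_swap_eq_swap_at)
  have m: "m \<le> length A" "m \<noteq> Suc p" "m \<noteq> Suc (Suc p)" using d1 e p by auto
  show ?thesis using e t sop_yop_other[OF p(2) m, of x]
    by (simp add: lc_op_one gen_op_dS[OF e(5)] gen_op_dS[OF e(6)] p)
qed

lemma rel5_se_holds: assumes
    "(L, R) \<in> {(one [a, b], one [c, d]) | i j a b c d. far i j \<and> a \<in> dS i \<and> b \<in> dE j \<and> c \<in> dE j
    \<and> d \<in> dS i}"
  shows "lc_op N smul act A L x = lc_op N smul act A R x"
proof -
  obtain i k a b c d where e: "L = one [a, b]" "R = one [c, d]" "far i k" "a \<in> dS i" "b \<in> dE k"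
      "c \<in> dE k" "d \<in> dS i"
    using assms by blast
  have "gen_defined A b" "gen_defined A d" using lc_ok_head_defined[OF okL[unfolded e]]
      lc_ok_head_defined[OF okR[unfolded e]] by simp_all
  then obtain p q where pq: "i = Suc p" "Suc p < length A" "k = Suc q" "Suc q < length A"
    using gen_defined_dE[OF e(5)] gen_defined_dS[OF e(7)] index_Suc by metis
  have "sop N (length A) i (eop N (length A) k x) = eop N (length A) k (sop N (length A) i x)"
  proof (cases "i + 1 < k")
    case True
    then show ?thesis unfolding pq by (intro sop_eop_far) (use pq in simp_all)
  next
    case False
    then have "Suc q < p" using e(3) pq by (simp add: far_def)
    then show ?thesis unfolding pq by (intro eop_sop_far[symmetric]) (use pq in simp_all)
  qed
  then show ?thesis using e
      by (simp add: lc_op_one gen_op_dS[OF e(4)] gen_op_dE[OF e(5)] gen_op_dE[OF e(6)]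
      gen_op_dS[OF e(7)])
qed

lemma rel5_ee_holds: assumes
    "(L, R) \<in> {(one [a, b], one [c, d]) | i j a b c d. far i j \<and> a \<in> dE i \<and> b \<in> dE j \<and> c \<in> dE j
    \<and> d \<in> dE i}"
  shows "lc_op N smul act A L x = lc_op N smul act A R x"
proof -
  obtain i k a b c d where e: "L = one [a, b]" "R = one [c, d]" "far i k" "a \<in> dE i" "b \<in> dE k"
      "c \<in> dE k" "d \<in> dE i"
    using assms by blast
  have "gen_defined A b" "gen_defined A d" using lc_ok_head_defined[OF okL[unfolded e]]
      lc_ok_head_defined[OF okR[unfolded e]] by simp_all
  then obtain p q where pq: "i = Suc p" "Suc p < length A" "k = Suc q" "Suc q < length A"
    using gen_defined_dE[OF e(5)] gen_defined_dE[OF e(7)] index_Suc by metis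
  have "eop N (length A) i (eop N (length A) k x) = eop N (length A) k (eop N (length A) i x)"
  proof (cases "i + 1 < k")
    case True
    then show ?thesis unfolding pq by (intro eop_eop_far) (use pq in simp_all)
  next
    case False
    then have "Suc q < p" using e(3) pq by (simp add: far_def)
    then show ?thesis unfolding pq by (intro eop_eop_far[symmetric]) (use pq in simp_all)
  qed
  then show ?thesis using e
      by (simp add: lc_op_one gen_op_dE[OF e(4)] gen_op_dE[OF e(5)] gen_op_dE[OF e(6)]
      gen_op_dE[OF e(7)])
qed

lemma rel5_ey_holds: assumes
    "(L, R) \<in> {(one [a, Yg j], one [Yg j, b]) | i j a b. j \<noteq> i \<and> j \<noteq> i + 1 \<and> a \<in> dE i \<and> b \<in> dE i}"
  shows "lc_op N smul act A L x = lc_op N smul act A R x"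
proof -
  obtain i m a b where e: "L = one [a, Yg m]" "R = one [Yg m, b]" "m \<noteq> i" "m \<noteq> i + 1" "a \<in> dE i"
      "b \<in> dE i"
    using assms by blast
  have d1: "gen_defined A (Yg m)" using lc_ok_head_defined[OF okL[unfolded e]] by simp
  have d2: "gen_defined A b" using lc_ok_head_defined[OF okR[unfolded e]] by simp
  obtain p where p: "i = Suc p" "Suc p < length A" using gen_defined_dE[OF e(6) d2] index_Suc by blast
  have tyA: "(A ! p = 1) \<noteq> (A ! Suc p = 1)" using gen_defined_dE[OF e(6) d2] p mixed_pair[OF signs]
      by auto
  have B: "gen_target A b = A \<or> gen_target A b = swap_at A p" using gen_target_dE e(6) p by simp
  note g = mixed_target[OF p(2) tyA B]
  have m: "m \<le> length A" "m \<noteq> Suc p" "m \<noteq> Suc (Suc p)" using d1 e p by auto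
  have "eop N (length A) (Suc p) (yop N smul act A m x)
      = yop N smul act (gen_target A b) m (eop N (length A) (Suc p) x)"
    by (rule eop_yop_other[OF p(2) m tyA g])
  then show ?thesis using e
    by (simp add: lc_op_one gen_op_dE[OF e(5)] gen_op_dE[OF e(6)] p)
qed

lemma rel5_yy_holds: assumes "(L, R) \<in> {(one [Yg i, Yg j], one [Yg j, Yg i]) | i j. True}"
  shows "lc_op N smul act A L x = lc_op N smul act A R x"
proof -
  obtain i m where e: "L = one [Yg i, Yg m]" "R = one [Yg m, Yg i]" using assms by blast
  have "gen_defined A (Yg m)" "gen_defined A (Yg i)" using lc_ok_head_defined[OF okL[unfolded e]]
      lc_ok_head_defined[OF okR[unfolded e]] by simp_all
  then show ?thesis using e yop_commute[of i A m x] by (simp add: lc_op_one)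
qed

lemma rel6_se_holds: assumes "(L, R) \<in> {(one [Sh i, a], one [b]) | i a b. a \<in> dE i \<and> b \<in> dE i}"
  shows "lc_op N smul act A L x = lc_op N smul act A R x"
proof -
  obtain i a b where e: "L = one [Sh i, a]" "R = one [b]" "a \<in> dE i" "b \<in> dE i" using assms by blast
  have "gen_defined A a" using lc_ok_head_defined[OF okL[unfolded e]] by simp
  then obtain p where p: "i = Suc p" "Suc p < length A" using gen_defined_dE[OF e(3)] index_Suc by blast
  show ?thesis using e p sop_eop_same[where x = x, OF p(2)]
      by (simp add: lc_op_one gen_op_dE[OF e(3)] gen_op_dE[OF e(4)])
qed

lemma rel6_es_holds: assumes "(L, R) \<in> {(one [a, Sh i], one [b]) | i a b. a \<in> dE i \<and> b \<in> dE i}"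
  shows "lc_op N smul act A L x = lc_op N smul act A R x"
proof -
  obtain i a b where e: "L = one [a, Sh i]" "R = one [b]" "a \<in> dE i" "b \<in> dE i" using assms by blast
  have "gen_defined A b" using lc_ok_head_defined[OF okR[unfolded e]] by simp
  then obtain p where p: "i = Suc p" "Suc p < length A" using gen_defined_dE[OF e(4)] index_Suc by blast
  show ?thesis using e p eop_sop_same[where x = x, OF p(2)]
      by (simp add: lc_op_one gen_op_dE[OF e(3)] gen_op_dE[OF e(4)])
qed

lemma rel6_see_holds: assumes "(L, R) \<in> {(one [a, b, c], one [d, e]) | i a b c d e.
        a \<in> dS i \<and> b \<in> dE (i + 1) \<and> c \<in> dE i \<and> d \<in> dS (i + 1) \<and> e \<in> dE i}"
  shows "lc_op N smul act A L x = lc_op N smul act A R x"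
proof -
  obtain i a b c d e where e: "L = one [a, b, c]" "R = one [d, e]" "a \<in> dS i" "b \<in> dE (i + 1)" "c \<in> dE i"
    "d \<in> dS (i + 1)" "e \<in> dE i" using assms by blast
  have dd: "gen_defined A c" "gen_defined (gen_target A c) b"
      using lc_ok_head_defined[OF okL[unfolded e]] by simp_all
  have "1 \<le> i" "i + 1 < length A" using gen_defined_dE[OF e(5) dd(1)] gen_defined_dE[OF e(4) dd(2)]
      by auto
  then obtain p where p: "i = Suc p" "Suc (Suc p) < length A" by (rule index_Suc_Suc)
  show ?thesis using e p sop_eop_Suc_eop[where x = x, OF p(2)]
    by (simp add: lc_op_one gen_op_dS[OF e(3)] gen_op_dE[OF e(4)] gen_op_dE[OF e(5)]
        gen_op_dS[OF e(6)] gen_op_dE[OF e(7)])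
qed

lemma rel6_ees_holds: assumes "(L, R) \<in> {(one [a, b, c], one [d, e]) | i a b c d e.
        a \<in> dE i \<and> b \<in> dE (i + 1) \<and> c \<in> dS i \<and> d \<in> dE i \<and> e \<in> dS (i + 1)}"
  shows "lc_op N smul act A L x = lc_op N smul act A R x"
proof -
  obtain i a b c d e where e: "L = one [a, b, c]" "R = one [d, e]" "a \<in> dE i" "b \<in> dE (i + 1)" "c \<in> dS i"
    "d \<in> dE i" "e \<in> dS (i + 1)" using assms by blast
  have dd: "gen_defined A c" "gen_defined (gen_target A c) b"
      using lc_ok_head_defined[OF okL[unfolded e]] by simp_all
  have "1 \<le> i" "i + 1 < length A" using gen_defined_dS[OF e(5) dd(1)] gen_defined_dE[OF e(4) dd(2)]
      by auto
  then obtain p where p: "i = Suc p" "Suc (Suc p) < length A" by (rule index_Suc_Suc)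
  show ?thesis using e p eop_eop_Suc_sop[where x = x, OF p(2)]
    by (simp add: lc_op_one gen_op_dE[OF e(3)] gen_op_dE[OF e(4)] gen_op_dS[OF e(5)]
        gen_op_dE[OF e(6)] gen_op_dS[OF e(7)])
qed

lemma rel6_ees_Suc_holds: assumes "(L, R) \<in> {(one [a, b, c], one [d, e]) | i a b c d e.
        a \<in> dE (i + 1) \<and> b \<in> dE i \<and> c \<in> dS (i + 1) \<and> d \<in> dE (i + 1) \<and> e \<in> dS i}"
  shows "lc_op N smul act A L x = lc_op N smul act A R x"
proof -
  obtain i a b c d e where e: "L = one [a, b, c]" "R = one [d, e]" "a \<in> dE (i + 1)" "b \<in> dE i"
      "c \<in> dS (i + 1)"
    "d \<in> dE (i + 1)" "e \<in> dS i" using assms by blast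
  have dd: "gen_defined A c" "gen_defined (gen_target A c) b"
      using lc_ok_head_defined[OF okL[unfolded e]] by simp_all
  have "1 \<le> i" "i + 1 < length A" using gen_defined_dS[OF e(5) dd(1)] gen_defined_dE[OF e(4) dd(2)]
      by auto
  then obtain p where p: "i = Suc p" "Suc (Suc p) < length A" by (rule index_Suc_Suc)
  show ?thesis using e p eop_Suc_eop_sop_Suc[where x = x, OF p(2)]
    by (simp add: lc_op_one gen_op_dE[OF e(3)] gen_op_dE[OF e(4)] gen_op_dS[OF e(5)]
        gen_op_dE[OF e(6)] gen_op_dS[OF e(7)])
qed

lemma rel6_see_Suc_holds: assumes "(L, R) \<in> {(one [a, b, c], one [d, e]) | i a b c d e.
        a \<in> dS (i + 1) \<and> b \<in> dE i \<and> c \<in> dE (i + 1) \<and> d \<in> dS i \<and> e \<in> dE (i + 1)}"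
  shows "lc_op N smul act A L x = lc_op N smul act A R x"
proof -
  obtain i a b c d e where e: "L = one [a, b, c]" "R = one [d, e]" "a \<in> dS (i + 1)" "b \<in> dE i"
      "c \<in> dE (i + 1)"
    "d \<in> dS i" "e \<in> dE (i + 1)" using assms by blast
  have dd: "gen_defined A c" "gen_defined (gen_target A c) b"
      using lc_ok_head_defined[OF okL[unfolded e]] by simp_all
  have "1 \<le> i" "i + 1 < length A" using gen_defined_dE[OF e(5) dd(1)] gen_defined_dE[OF e(4) dd(2)]
      by auto
  then obtain p where p: "i = Suc p" "Suc (Suc p) < length A" by (rule index_Suc_Suc)
  show ?thesis using e p sop_Suc_eop_eop_Suc[where x = x, OF p(2)]
    by (simp add: lc_op_one gen_op_dS[OF e(3)] gen_op_dE[OF e(4)] gen_op_dE[OF e(5)]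
        gen_op_dS[OF e(6)] gen_op_dE[OF e(7)])
qed

lemma rel6_eee_Suc_holds: assumes "(L, R) \<in> {(one [a, b, c], one [d]) | i a b c d.
        a \<in> dE (i + 1) \<and> b \<in> dE i \<and> c \<in> dE (i + 1) \<and> d \<in> dE (i + 1)}"
  shows "lc_op N smul act A L x = lc_op N smul act A R x"
proof -
  obtain i a b c d where e: "L = one [a, b, c]" "R = one [d]" "a \<in> dE (i + 1)" "b \<in> dE i"
      "c \<in> dE (i + 1)"
    "d \<in> dE (i + 1)" using assms by blast
  have dd: "gen_defined A c" "gen_defined (gen_target A c) b"
      using lc_ok_head_defined[OF okL[unfolded e]] by simp_all
  have "1 \<le> i" "i + 1 < length A" using gen_defined_dE[OF e(5) dd(1)] gen_defined_dE[OF e(4) dd(2)]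
      by auto
  then obtain p where p: "i = Suc p" "Suc (Suc p) < length A" by (rule index_Suc_Suc)
  show ?thesis using e p eop_Suc_eop_eop_Suc[where x = x, OF p(2)]
    by (simp add: lc_op_one gen_op_dE[OF e(3)] gen_op_dE[OF e(4)] gen_op_dE[OF e(5)] gen_op_dE[OF e(6)])
qed

lemma rel6_eee_holds: assumes "(L, R) \<in> {(one [a, b, c], one [d]) | i a b c d.
        a \<in> dE i \<and> b \<in> dE (i + 1) \<and> c \<in> dE i \<and> d \<in> dE i}"
  shows "lc_op N smul act A L x = lc_op N smul act A R x"
proof -
  obtain i a b c d where e: "L = one [a, b, c]" "R = one [d]" "a \<in> dE i" "b \<in> dE (i + 1)" "c \<in> dE i"
    "d \<in> dE i" using assms by blast
  have dd: "gen_defined A c" "gen_defined (gen_target A c) b"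
      using lc_ok_head_defined[OF okL[unfolded e]] by simp_all
  have "1 \<le> i" "i + 1 < length A" using gen_defined_dE[OF e(5) dd(1)] gen_defined_dE[OF e(4) dd(2)]
      by auto
  then obtain p where p: "i = Suc p" "Suc (Suc p) < length A" by (rule index_Suc_Suc)
  show ?thesis using e p eop_eop_Suc_eop[where x = x, OF p(2)]
    by (simp add: lc_op_one gen_op_dE[OF e(3)] gen_op_dE[OF e(4)] gen_op_dE[OF e(5)] gen_op_dE[OF e(6)])
qed

lemma rel7_sy_holds: assumes
    "(L, R) \<in> {([(1, [Sp i, Yg i]), (-1, [Yg (i + 1), Sp i])], [(-1, [])]) | i. True}"
  shows "lc_op N smul act A L x = lc_op N smul act A R x"
proof -
  obtain i where e: "L = [(1, [Sp i, Yg i]), (-1, [Yg (i + 1), Sp i])]" "R = [(-1, [])]" using assms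
      by blast
  have d: "gen_defined A (Sp i)" using lc_ok_second_defined[OF okL[unfolded e]] by simp
  then obtain p where p: "i = Suc p" "Suc p < length A" using index_Suc by auto
  have eq: "A ! p = A ! Suc p" using d p by simp
  have sA: "swap_at A p = A" using seq_swap_eq[of i A] d p by (simp add: seq_swap_eq_swap_at)
  have o: "Casimir A (Suc p) (Suc (Suc p)) (sop N (length A) (Suc p) x) = x"
    using Casimir_adjacent_same[OF p(2)] eq sop_sop[OF p(2) x] by simp
  have "sop N (length A) (Suc p) (yop N smul act A (Suc p) x)
      = yop N smul act A (Suc (Suc p)) (sop N (length A) (Suc p) x) - x"
    using sop_yop_Suc[OF p(2), of x] sA o by simp
  then show ?thesis using e p by (simp add: lc_op_diff lc_op_minus)
qed

lemma rel7_sy_Suc_holds: assumes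
    "(L, R) \<in> {([(1, [Sp i, Yg (i + 1)]), (-1, [Yg i, Sp i])], [(1, [])]) | i. True}"
  shows "lc_op N smul act A L x = lc_op N smul act A R x"
proof -
  obtain i where e: "L = [(1, [Sp i, Yg (i + 1)]), (-1, [Yg i, Sp i])]" "R = [(1, [])]" using assms
      by blast
  have d: "gen_defined A (Sp i)" using lc_ok_second_defined[OF okL[unfolded e]] by simp
  then obtain p where p: "i = Suc p" "Suc p < length A" using index_Suc by auto
  have eq: "A ! p = A ! Suc p" using d p by simp
  have sA: "swap_at A p = A" using seq_swap_eq[of i A] d p by (simp add: seq_swap_eq_swap_at)
  have o: "Casimir A (Suc p) (Suc (Suc p)) (sop N (length A) (Suc p) x) = x"
    using Casimir_adjacent_same[OF p(2)] eq sop_sop[OF p(2) x] by simp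
  have "sop N (length A) (Suc p) (yop N smul act A (Suc (Suc p)) x)
      = yop N smul act A (Suc p) (sop N (length A) (Suc p) x) + x"
    using sop_yop_Suc_Suc[OF p(2), of x] sA o by simp
  then show ?thesis using e p by (simp add: lc_op_diff lc_op_one)
qed

lemma rel7_shy_holds: assumes
    "(L, R) \<in> {([(1, [Sh i, Yg i]), (-1, [Yg (i + 1), Sh i])], [(1, [Eh i])]) | i. True}"
  shows "lc_op N smul act A L x = lc_op N smul act A R x"
proof -
  obtain i where e: "L = [(1, [Sh i, Yg i]), (-1, [Yg (i + 1), Sh i])]" "R = [(1, [Eh i])]"
      using assms by blast
  have d: "gen_defined A (Sh i)" using lc_ok_second_defined[OF okL[unfolded e]] by simp
  then obtain p where p: "i = Suc p" "Suc p < length A" using index_Suc by auto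
  have ty: "(A ! p = 1) \<noteq> (A ! Suc p = 1)" using d p mixed_pair[OF signs] by simp
  have ty': "(swap_at A p ! p = 1) \<noteq> (swap_at A p ! Suc p = 1)" using ty p by (simp add: nth_swap_at)
  have o: "Casimir (swap_at A p) (Suc p) (Suc (Suc p)) (sop N (length A) (Suc p) x) =
      - eop N (length A) (Suc p) x"
    using Casimir_adjacent_mixed[of p "swap_at A p"] ty' p eop_sop_same[where x = x, OF p(2)] by simp
  have "sop N (length A) (Suc p) (yop N smul act A (Suc p) x)
      = yop N smul act (swap_at A p) (Suc (Suc p)) (sop N (length A) (Suc p) x)
      + eop N (length A) (Suc p) x"
    using sop_yop_Suc[OF p(2), of x] o by simp
  then show ?thesis using e p by (simp add: lc_op_diff lc_op_one seq_swap_eq_swap_at)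
qed

lemma rel7_shy_Suc_holds: assumes
    "(L, R) \<in> {([(1, [Sh i, Yg (i + 1)]), (-1, [Yg i, Sh i])], [(-1, [Eh i])]) | i. True}"
  shows "lc_op N smul act A L x = lc_op N smul act A R x"
proof -
  obtain i where e: "L = [(1, [Sh i, Yg (i + 1)]), (-1, [Yg i, Sh i])]" "R = [(-1, [Eh i])]"
      using assms by blast
  have d: "gen_defined A (Sh i)" using lc_ok_second_defined[OF okL[unfolded e]] by simp
  then obtain p where p: "i = Suc p" "Suc p < length A" using index_Suc by auto
  have ty: "(A ! p = 1) \<noteq> (A ! Suc p = 1)" using d p mixed_pair[OF signs] by simp
  have ty': "(swap_at A p ! p = 1) \<noteq> (swap_at A p ! Suc p = 1)" using ty p by (simp add: nth_swap_at)
  have o: "Casimir (swap_at A p) (Suc p) (Suc (Suc p)) (sop N (length A) (Suc p) x) =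
      - eop N (length A) (Suc p) x"
    using Casimir_adjacent_mixed[of p "swap_at A p"] ty' p eop_sop_same[where x = x, OF p(2)] by simp
  have "sop N (length A) (Suc p) (yop N smul act A (Suc (Suc p)) x)
      = yop N smul act (swap_at A p) (Suc p) (sop N (length A) (Suc p) x)
      - eop N (length A) (Suc p) x"
    using sop_yop_Suc_Suc[OF p(2), of x] o by simp
  then show ?thesis using e p by (simp add: lc_op_diff lc_op_minus seq_swap_eq_swap_at)
qed

lemma rel8_ey_holds: assumes "(L, R) \<in> {([(1, [a, Yg i]), (1, [a, Yg (i + 1)])], []) | i a. a \<in> dE i}"
  shows "lc_op N smul act A L x = lc_op N smul act A R x"
proof -
  obtain i a where e: "L = [(1, [a, Yg i]), (1, [a, Yg (i + 1)])]" "R = []" "a \<in> dE i" using assms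
      by blast
  have d: "gen_defined A a" using lc_ok_head_defined[OF okL[unfolded e]] by simp
  then obtain p where p: "i = Suc p" "Suc p < length A" using gen_defined_dE[OF e(3)] index_Suc by blast
  have ty: "(A ! p = 1) \<noteq> (A ! Suc p = 1)" using gen_defined_dE[OF e(3) d] p mixed_pair[OF signs] by simp
  have "eop N (length A) (Suc p) (yop N smul act A (Suc p) x)
      + eop N (length A) (Suc p) (yop N smul act A (Suc (Suc p)) x) = 0"
    using eop_yop_add_adjacent[OF p(2) ty, of x] by (simp add: additive.add[OF additive_eop])
  then show ?thesis using e p by (simp add: lc_op_add lc_op_Nil gen_op_dE[OF e(3)])
qed

lemma rel8_ye_holds: assumes "(L, R) \<in> {([(1, [Yg i, a]), (1, [Yg (i + 1), a])], []) | i a. a \<in> dE i}"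
  shows "lc_op N smul act A L x = lc_op N smul act A R x"
proof -
  obtain i a where e: "L = [(1, [Yg i, a]), (1, [Yg (i + 1), a])]" "R = []" "a \<in> dE i" using assms
      by blast
  have d: "gen_defined A a" using lc_ok_head_defined[OF okL[unfolded e]] by simp
  then obtain p where p: "i = Suc p" "Suc p < length A" using gen_defined_dE[OF e(3)] index_Suc by blast
  have tyA: "(A ! p = 1) \<noteq> (A ! Suc p = 1)" using gen_defined_dE[OF e(3) d] p mixed_pair[OF signs]
      by simp
  have B: "gen_target A a = A \<or> gen_target A a = swap_at A p" using gen_target_dE e(3) p by simp
  note g = mixed_target[OF p(2) tyA B]
  have "yop N smul act (gen_target A a) (Suc p) (eop N (length (gen_target A a)) (Suc p) x) +
        yop N smul act (gen_target A a) (Suc (Suc p)) (eop N (length (gen_target A a)) (Suc p) x) = 0"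
    by (rule yop_add_adjacent_eop) (use g p in simp_all)
  then show ?thesis using e p by (simp add: lc_op_add lc_op_Nil gen_op_dE[OF e(3)])
qed

end

lemma fun_plus_eta: "(\<lambda>ps. x ps + y ps) = x + (y :: nat list \<Rightarrow> 'm)"
  by (simp add: fun_eq_iff)

lemma gen_op_Tens: "gen_op N smul act A g x \<in> Tens N (length A)"
  by (cases g) (simp_all add: sop_Tens eop_Tens yop_Tens)

lemma gen_op_add:
  "gen_defined A g \<Longrightarrow>
   gen_op N smul act A g (\<lambda>ps. x ps + y ps)
       = (\<lambda>ps. gen_op N smul act A g x ps + gen_op N smul act A g y ps)"
  by (cases g) (simp_all add: fun_plus_eta additive.add[OF additive_sop]
      additive.add[OF additive_eop] yop_add)

lemma gen_op_smul:
  "gen_defined A g \<Longrightarrow> gen_op N smul act A g (\<lambda>ps. smul c (x ps))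
      = (\<lambda>ps. smul c (gen_op N smul act A g x ps))"
  by (cases g) (simp_all add: sop_smul eop_smul yop_smul)

lemma gen_op_glact:
  assumes signs: "set A \<subseteq> {1, -1}" and d: "gen_defined A g" and ab: "a < N" "b < N"
  shows "gen_op N smul act A g (glact N act A a b x)
      = glact N act (gen_target A g) a b (gen_op N smul act A g x)"
proof (cases g)
  case (Sp i)
  then obtain p where p: "i = Suc p" "Suc p < length A" using d index_Suc by auto
  have "swap_at A p = A" using seq_swap_eq[of i A] d p Sp by (simp add: seq_swap_eq_swap_at)
  then show ?thesis using Sp p ab by (simp add: glact_eq_diag_act sop_diag_act)
next
  case (Sh i)
  then obtain p where p: "i = Suc p" "Suc p < length A" using d index_Suc by auto
  then show ?thesis using Sh ab by (simp add: glact_eq_diag_act sop_diag_act seq_swap_eq_swap_at)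
next
  case (Ep i)
  then obtain p where p: "i = Suc p" "Suc p < length A" using d index_Suc by auto
  have mixed: "(A ! p = 1) \<noteq> (A ! Suc p = 1)" using d p Ep mixed_pair[OF signs] by simp
  have "eop N (length A) (Suc p) (diag_act A (length A) a b x)
      = diag_act A (length A) a b (eop N (length A) (Suc p) x)"
    by (rule eop_diag_act[OF p(2) ab mixed mixed]) auto
  then show ?thesis using Ep p by (simp add: glact_eq_diag_act)
next
  case (Eh i)
  then obtain p where p: "i = Suc p" "Suc p < length A" using d index_Suc by auto
  have mixed: "(A ! p = 1) \<noteq> (A ! Suc p = 1)" using d p Eh mixed_pair[OF signs] by simp
  have "eop N (length A) (Suc p) (diag_act A (length A) a b x)
      = diag_act (swap_at A p) (length (swap_at A p)) a b (eop N (length A) (Suc p) x)"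
    by (rule eop_diag_act[OF p(2) ab mixed mixed_target[OF p(2) mixed disjI2[OF refl]]])
  then show ?thesis using Eh p by (simp add: glact_eq_diag_act seq_swap_eq_swap_at)
next
  case (Yg i)
  then show ?thesis using d ab by (simp add: glact_eq_diag_act yop_diag_act)
qed

lemma highest_weight_rep_obtain:
  assumes "highest_weight N smul act"
  obtains v0 lam where "highest_weight_rep N smul act v0 lam"
proof -
  obtain v0 lam where "\<forall>i<N. act i i v0 = smul (lam i) v0" "\<forall>i<N. \<forall>j<N. i < j \<longrightarrow> act i j v0 = 0"
      "\<forall>S. M.subspace S \<and> v0 \<in> S \<and> (\<forall>i<N. \<forall>j<N. \<forall>x\<in>S. act i j x \<in> S) \<longrightarrow> S = UNIV"
    using assms unfolding highest_weight_def by blast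
  then have "highest_weight_rep N smul act v0 lam"
    using gl_module by (intro highest_weight_rep.intro gl_rep.intro highest_weight_rep_axioms.intro)
        blast+
  then show ?thesis by (rule that)
qed

end

context highest_weight_rep begin

lemma omegaM_0: "smul (omegaM N smul act 0) m = smul (of_nat N) m"
  using omega_comp_omegaM[of 0 m] omega_comp_0 by simp

lemma VB_rels_hold:
  assumes signs: "set A \<subseteq> {1, -1}" and rel: "(L, R) \<in> VB_rels (omegaM N smul act) A"
    and ok: "lc_ok A L T" "lc_ok A R T" and x: "x \<in> Tens N (length A)"
  shows "lc_op N smul act A L x = lc_op N smul act A R x"
proof -
  note rels = rel1_holds rel2_far_holds rel2_braid_holds rel2_y_holds
    rel3_holds[where \<omega> = "omegaM N smul act", OF _ _ _ _ omegaM_0]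
    rel4_holds[where \<omega> = "omegaM N smul act", OF _ _ _ _ omega_comp_omegaM]
    rel5_se_holds rel5_ee_holds rel5_ey_holds rel5_yy_holds
    rel6_se_holds rel6_es_holds rel6_see_holds rel6_ees_holds
    rel6_ees_Suc_holds rel6_see_Suc_holds rel6_eee_Suc_holds rel6_eee_holds
    rel7_sy_holds rel7_sy_Suc_holds rel7_shy_holds rel7_shy_Suc_holds rel8_ey_holds rel8_ye_holds
  show ?thesis
    using rel unfolding VB_rels_def by (elim UnE) (erule rels[OF x ok signs])+
qed

end

theorem mainTheorem14:
  fixes N r t :: nat
    and smul :: "complex \<Rightarrow> 'm::ab_group_add \<Rightarrow> 'm"
    and act :: "nat \<Rightarrow> nat \<Rightarrow> 'm \<Rightarrow> 'm"
  assumes "gl_module N smul act"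
    and "highest_weight N smul act"
  shows "\<forall>A \<in> Seq r t.
     \<comment> \<open>the assigned operators respect all defining relations of VB_{r,t}(omega(M))\<close>
     (\<forall>(L, R) \<in> VB_rels (omegaM N smul act) A.
        (\<exists>T. lc_ok A L T \<and> lc_ok A R T) \<longrightarrow>
        (\<forall>x \<in> Tens N (length A). lc_op N smul act A L x = lc_op N smul act A R x))
   \<and> \<comment> \<open>every generator acts by a gl_N-module homomorphism between the assigned modules\<close>
     (\<forall>g. gen_defined A g \<longrightarrow>
        (\<forall>x \<in> Tens N (length A). gen_op N smul act A g x \<in> Tens N (length (gen_target A g))) \<and>
        (\<forall>x \<in> Tens N (length A). \<forall>y \<in> Tens N (length A).
            gen_op N smul act A g (\<lambda>ps. x ps + y ps) = (\<lambda>ps. gen_op N smul act A g x ps + gen_op N smul act A g y ps)) \<and>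
        (\<forall>c. \<forall>x \<in> Tens N (length A).
            gen_op N smul act A g (\<lambda>ps. smul c (x ps)) = (\<lambda>ps. smul c (gen_op N smul act A g x ps))) \<and>
        (\<forall>a<N. \<forall>b<N. \<forall>x \<in> Tens N (length A).
            gen_op N smul act A g (glact N act A a b x) = glact N act (gen_target A g) a b (gen_op N smul act A g x)))"
proof -
  interpret gl_rep N smul act by (rule gl_rep.intro) (rule assms(1))
  obtain v0 lam where "highest_weight_rep N smul act v0 lam"
    using highest_weight_rep_obtain[OF assms(2)] .
  then interpret highest_weight_rep N smul act v0 lam .
  have signs: "set A \<subseteq> {1, -1}" if "A \<in> Seq r t" for A
    using that by (simp add: Seq_def)
  show ?thesis
    by (auto simp: gen_op_Tens gen_op_add gen_op_smul gen_op_glact signs intro: VB_rels_hold[OF signs])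
qed

end
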